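(* Let $\Omega$ be a bounded domain in $\mathbb R^n$, $n\ge3$, whose boundary $\partial\Omega$ is a smooth hypersurface, and let $(f,\Gamma)$ satisfy the standing structural assumptions. If $u$ is a continuous viscosity solution of $f(\lambda(-A^u))=1$, $u>0$ in $\Omega$, with $u(x)\to+\infty$ as $\mathrm{dist}(x,\partial\Omega)\to0$, then $$\lim_{\mathrm{dist}(x,\partial\Omega)\to0}\mathrm{dist}(x,\partial\Omega)^{\frac{n-2}{2}}u(x)=\alpha\,2^{-\frac{n-2}{2}},$$ where $\alpha=\alpha(f)$ is the constant of the canonical solutions.
   Context: Let $n\ge3$. For a positive $C^2$ function $u$, its conformal Hessian is $A^u=-\frac{2}{n-2}u^{-\frac{n+2}{n-2}}\nabla^2u+\frac{2n}{(n-2)^2}u^{-\frac{2n}{n-2}}\nabla u\otimes\nabla u-\frac{2}{(n-2)^2}u^{-\frac{2n}{n-2}}|\nabla u|^2I$, and $\lambda(-A^u)$ is the vector of eigenvalues of $-A^u$. Let $\Gamma_n=\{\mu:\mu_i>0\ \forall i\}$. Standing structural assumptions on $(f,\Gamma)$: $\Gamma\subset\mathbb R^n$ is an open symmetric cone with vertex at the origin, $\Gamma+\Gamma_n\subset\Gamma$; $f\in C^0(\bar\Gamma)$ symmetric, $f>0$ in $\Gamma$, $f=0$ on $\partial\Gamma$, $f(\lambda+\mu)\ge f(\lambda)$ for $\lambda\in\Gamma,\mu\in\Gamma_n$, $f$ homogeneous of some positive degree. Viscosity solutions: sub-solutions $u\in USC$ satisfy $f(\lambda(-A^\varphi(x_0)))\ge1$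 for every $C^2$ $\varphi$ touching $u$ from above at $x_0$; super-solutions $u\in LSC$ satisfy either $\lambda(-A^\varphi(x_0))\notin\bar\Gamma$ or $f(\lambda(-A^\varphi(x_0)))\le1$ for every $C^2$ $\varphi$ touching from below; solutions are continuous functions that are both. Canonical solutions: there is a unique constant $\alpha=\alpha(f)>0$ such that for all $R>0$, $x_0\in\mathbb R^n$ the functions $u^{(in)}_{R,x_0}(x)=\alpha\big(\frac{R}{R^2-|x-x_0|^2}\big)^{\frac{n-2}{2}}$ and $u^{(out)}_{R,x_0}(x)=\alpha\big(\frac{R}{|x-x_0|^2-R^2}\big)^{\frac{n-2}{2}}$ satisfy $f(\lambda(-A^{u}))=1$ in $B_R(x_0)$ and in $\mathbb R^n\setminus\bar B_R(x_0)$ respectively. *)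

theory Defs
  imports "HOL-Analysis.Analysis"
begin

definition pderiv :: "(real^'n \<Rightarrow> real) \<Rightarrow> 'n \<Rightarrow> real^'n \<Rightarrow> real" where
  "pderiv g i x = frechet_derivative g (at x) (axis i 1)"

definition grad :: "(real^'n \<Rightarrow> real) \<Rightarrow> real^'n \<Rightarrow> real^'n" where
  "grad g x = (\<chi> i. pderiv g i x)"

definition hess :: "(real^'n \<Rightarrow> real) \<Rightarrow> real^'n \<Rightarrow> real^'n^'n" where
  "hess g x = (\<chi> i j. pderiv (pderiv g i) j x)"

fun Ck_on :: "nat \<Rightarrow> (real^'n) set \<Rightarrow> (real^'n \<Rightarrow> real) \<Rightarrow> bool" where
  "Ck_on 0 S g = continuous_on S g"
| "Ck_on (Suc k) S g = (continuous_on S g \<and> (\<forall>x\<in>S. g differentiable (at x)) \<and>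
                        (\<forall>i. Ck_on k S (pderiv g i)))"

definition C2_on :: "(real^'n) set \<Rightarrow> (real^'n \<Rightarrow> real) \<Rightarrow> bool" where
  "C2_on S g \<longleftrightarrow> open S \<and> Ck_on 2 S g"

definition smooth_on :: "(real^'n) set \<Rightarrow> (real^'n \<Rightarrow> real) \<Rightarrow> bool" where
  "smooth_on S g \<longleftrightarrow> open S \<and> (\<forall>k. Ck_on k S g)"

definition smooth_bounded_domain :: "(real^'n) set \<Rightarrow> bool" where
  "smooth_bounded_domain \<Omega> \<longleftrightarrow> open \<Omega> \<and> connected \<Omega> \<and> bounded \<Omega> \<and> \<Omega> \<noteq> {} \<and>
     (\<forall>p\<in>frontier \<Omega>. \<exists>U \<rho>. p \<in> U \<and> smooth_on U \<rho> \<and> (\<forall>x\<in>U. grad \<rho> x \<noteq> 0) \<and>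
          \<Omega> \<inter> U = {x\<in>U. \<rho> x < 0} \<and> frontier \<Omega> \<inter> U = {x\<in>U. \<rho> x = 0})"

definition conf_hess :: "(real^'n::finite \<Rightarrow> real) \<Rightarrow> real^'n \<Rightarrow> real^'n^'n" where
  "conf_hess u x = (let n = real CARD('n); v = u x; g = grad u x in
     (- (2 / (n - 2)) * v powr (- (n + 2) / (n - 2))) *\<^sub>R hess u x
     + ((2 * n) / (n - 2)^2 * v powr (- (2 * n) / (n - 2))) *\<^sub>R (\<chi> i j. g $ i * g $ j)
     - ((2 / (n - 2)^2) * v powr (- (2 * n) / (n - 2)) * (norm g)^2) *\<^sub>R mat 1)"

definition diag_mat :: "real^'n \<Rightarrow> real^'n^'n" where
  "diag_mat l = (\<chi> i j. if i = j then l $ i else 0)"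

definition eigvals :: "real^'n^'n \<Rightarrow> real^'n" where
  "eigvals M = (SOME l. \<exists>P. orthogonal_matrix P \<and> M = P ** diag_mat l ** transpose P)"

definition lam_neg_A :: "(real^'n::finite \<Rightarrow> real) \<Rightarrow> real^'n \<Rightarrow> real^'n" where
  "lam_neg_A u x = eigvals (- conf_hess u x)"

definition pos_cone :: "(real^'n) set" where
  "pos_cone = {l. \<forall>i. l $ i > 0}"

definition structural :: "(real^'n \<Rightarrow> real) \<Rightarrow> (real^'n) set \<Rightarrow> bool" where
  "structural f \<Gamma> \<longleftrightarrow>
     open \<Gamma> \<and> \<Gamma> \<noteq> {} \<and>
     (\<forall>l\<in>\<Gamma>. \<forall>p. p permutes (UNIV::'n set) \<longrightarrow> (\<chi> i. l $ p i) \<in> \<Gamma>) \<and>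
     (\<forall>l\<in>\<Gamma>. \<forall>t>0. t *\<^sub>R l \<in> \<Gamma>) \<and>
     (\<forall>l\<in>\<Gamma>. \<forall>m\<in>pos_cone. l + m \<in> \<Gamma>) \<and>
     continuous_on (closure \<Gamma>) f \<and>
     (\<forall>l\<in>closure \<Gamma>. \<forall>p. p permutes (UNIV::'n set) \<longrightarrow> f (\<chi> i. l $ p i) = f l) \<and>
     (\<forall>l\<in>\<Gamma>. f l > 0) \<and>
     (\<forall>l\<in>frontier \<Gamma>. f l = 0) \<and>
     (\<forall>l\<in>\<Gamma>. \<forall>m\<in>pos_cone. f (l + m) \<ge> f l) \<and>
     (\<exists>d>0. \<forall>l\<in>closure \<Gamma>. \<forall>t>0. f (t *\<^sub>R l) = t powr d * f l)"

definition touches_above :: "(real^'n \<Rightarrow> real) \<Rightarrow> (real^'n \<Rightarrow> real) \<Rightarrow> (real^'n) set \<Rightarrow> real^'n \<Rightarrow> bool" where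
  "touches_above \<phi> u \<Omega> x0 \<longleftrightarrow> (\<exists>r>0. ball x0 r \<subseteq> \<Omega> \<and> C2_on (ball x0 r) \<phi> \<and>
      (\<forall>x\<in>ball x0 r. u x \<le> \<phi> x)) \<and> \<phi> x0 = u x0"

definition touches_below :: "(real^'n \<Rightarrow> real) \<Rightarrow> (real^'n \<Rightarrow> real) \<Rightarrow> (real^'n) set \<Rightarrow> real^'n \<Rightarrow> bool" where
  "touches_below \<phi> u \<Omega> x0 \<longleftrightarrow> (\<exists>r>0. ball x0 r \<subseteq> \<Omega> \<and> C2_on (ball x0 r) \<phi> \<and>
      (\<forall>x\<in>ball x0 r. \<phi> x \<le> u x)) \<and> \<phi> x0 = u x0"

definition visc_sub :: "(real^'n::finite \<Rightarrow> real) \<Rightarrow> (real^'n) set \<Rightarrow> (real^'n \<Rightarrow> real) \<Rightarrow> (real^'n) set \<Rightarrow> bool" where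
  "visc_sub f \<Gamma> u \<Omega> \<longleftrightarrow> (\<forall>x0\<in>\<Omega>. \<forall>\<phi>. touches_above \<phi> u \<Omega> x0 \<longrightarrow>
      lam_neg_A \<phi> x0 \<in> closure \<Gamma> \<and> f (lam_neg_A \<phi> x0) \<ge> 1)"

definition visc_super :: "(real^'n::finite \<Rightarrow> real) \<Rightarrow> (real^'n) set \<Rightarrow> (real^'n \<Rightarrow> real) \<Rightarrow> (real^'n) set \<Rightarrow> bool" where
  "visc_super f \<Gamma> u \<Omega> \<longleftrightarrow> (\<forall>x0\<in>\<Omega>. \<forall>\<phi>. touches_below \<phi> u \<Omega> x0 \<longrightarrow>
      lam_neg_A \<phi> x0 \<notin> closure \<Gamma> \<or> f (lam_neg_A \<phi> x0) \<le> 1)"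

definition visc_solution :: "(real^'n::finite \<Rightarrow> real) \<Rightarrow> (real^'n) set \<Rightarrow> (real^'n \<Rightarrow> real) \<Rightarrow> (real^'n) set \<Rightarrow> bool" where
  "visc_solution f \<Gamma> u \<Omega> \<longleftrightarrow> continuous_on \<Omega> u \<and> visc_sub f \<Gamma> u \<Omega> \<and> visc_super f \<Gamma> u \<Omega>"

definition classical_solution :: "(real^'n::finite \<Rightarrow> real) \<Rightarrow> (real^'n) set \<Rightarrow> (real^'n \<Rightarrow> real) \<Rightarrow> (real^'n) set \<Rightarrow> bool" where
  "classical_solution f \<Gamma> u S \<longleftrightarrow> C2_on S u \<and> (\<forall>x\<in>S. u x > 0 \<and>
      lam_neg_A u x \<in> closure \<Gamma> \<and> f (lam_neg_A u x) = 1)"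

definition u_in :: "'n::finite itself \<Rightarrow> real \<Rightarrow> real \<Rightarrow> real^'n \<Rightarrow> real^'n \<Rightarrow> real" where
  "u_in _ \<alpha> R x0 x = \<alpha> * (R / (R^2 - (dist x x0)^2)) powr ((real CARD('n) - 2) / 2)"

definition u_out :: "'n::finite itself \<Rightarrow> real \<Rightarrow> real \<Rightarrow> real^'n \<Rightarrow> real^'n \<Rightarrow> real" where
  "u_out _ \<alpha> R x0 x = \<alpha> * (R / ((dist x x0)^2 - R^2)) powr ((real CARD('n) - 2) / 2)"

text \<open>alpha is the canonical constant of f: the canonical functions solve the equation.
 (The paper asserts there is a unique such alpha > 0.)\<close>
definition canonical_const :: "(real^'n::finite \<Rightarrow> real) \<Rightarrow> (real^'n) set \<Rightarrow> real \<Rightarrow> bool" where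
  "canonical_const f \<Gamma> \<alpha> \<longleftrightarrow> \<alpha> > 0 \<and> (\<forall>R>0. \<forall>x0.
      classical_solution f \<Gamma> (u_in TYPE('n) \<alpha> R x0) (ball x0 R) \<and>
      classical_solution f \<Gamma> (u_out TYPE('n) \<alpha> R x0) (- cball x0 R))"

end

theory Submission
  imports Defs
begin

text \<open>A smooth bounded domain satisfies a uniform two-sided sphere condition: for some \<open>r > 0\<close>
  every boundary point \<open>q\<close> has an inner unit normal \<open>e\<close> with \<open>B(q + r e, r) \<subseteq> \<Omega>\<close> and
  \<open>B(q - r e, r) \<inter> \<Omega> = {}\<close>, and if \<open>q\<close> is a boundary point nearest to \<open>x \<in> \<Omega>\<close> then
  \<open>x = q + d e\<close> with \<open>d = dist(x, \<partial>\<Omega>)\<close>. The canonical solutions have \<open>-A\<^sup>u\<close> equal to a constant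
  multiple of the identity, so by homogeneity of \<open>f\<close> their multiples by \<open>t > 1\<close> (\<open>t < 1\<close>) are strict
  super-solutions (sub-solutions). Touching \<open>u\<close> with such a multiple at an extremum of the ratio
  gives \<open>u \<le> u_in\<close> on \<open>B(q + r e, r)\<close> and \<open>u \<ge> u_out\<close> outside \<open>B(q - r e, r)\<close>; the latter uses the
  boundary blow-up of \<open>u\<close> to keep the extremum inside \<open>\<Omega>\<close>. At \<open>x\<close> these comparisons read
  \<open>\<alpha> (r / (d (2r + d)))\<^bsup>(n-2)/2\<^esup> \<le> u x \<le> \<alpha> (r / (d (2r - d)))\<^bsup>(n-2)/2\<^esup>\<close>, and multiplying by
  \<open>d\<^bsup>(n-2)/2\<^esup>\<close> and letting \<open>d \<rightarrow> 0\<close> gives the limit \<open>\<alpha> 2\<^bsup>-(n-2)/2\<^esup>\<close>.\<close>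

section \<open>Partial derivatives and gradients\<close>

lemma linear_eq_sum_axis:
  fixes D :: "real^'n \<Rightarrow> real"
  assumes "linear D"
  shows "D v = (\<Sum>i\<in>UNIV. v$i * D (axis i 1))"
proof -
  have "v = (\<Sum>i\<in>UNIV. v$i *\<^sub>R axis i 1)"
    using basis_expansion[of v] by (simp add: scalar_mult_eq_scaleR)
  then have "D v = D (\<Sum>i\<in>UNIV. v$i *\<^sub>R axis i 1)" by simp
  also have "\<dots> = (\<Sum>i\<in>UNIV. v$i * D (axis i 1))"
    using assms by (simp add: linear_sum linear_scale)
  finally show ?thesis .
qed

lemma has_derivative_grad:
  fixes g :: "real^'n \<Rightarrow> real"
  assumes "g differentiable (at x)"
  shows "(g has_derivative (\<lambda>v. grad g x \<bullet> v)) (at x)"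
proof -
  have d: "(g has_derivative frechet_derivative g (at x)) (at x)"
    using assms frechet_derivative_works by blast
  then have "linear (frechet_derivative g (at x))"
    using has_derivative_linear by blast
  then have "frechet_derivative g (at x) = (\<lambda>v. grad g x \<bullet> v)"
    unfolding fun_eq_iff
    by (subst linear_eq_sum_axis) (simp_all add: grad_def pderiv_def inner_vec_def mult.commute)
  then show ?thesis using d by simp
qed

lemma pderiv_eq_if_has_derivative:
  fixes g h :: "real^'n \<Rightarrow> real"
  assumes "open S" "x \<in> S" "\<And>z. z \<in> S \<Longrightarrow> g z = h z" "(h has_derivative D) (at x)"
  shows "pderiv g i x = D (axis i 1)"
proof -
  have "(g has_derivative D) (at x)"
    using has_derivative_transform_within_open[OF assms(4) assms(1,2)] assms(3) by metis
  then show ?thesis unfolding pderiv_def using frechet_derivative_at by metis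
qed

lemma Ck_on_subset: "Ck_on k S g \<Longrightarrow> T \<subseteq> S \<Longrightarrow> Ck_on k T g"
  by (induction k arbitrary: g) (auto intro: continuous_on_subset)

lemma C2_on_subset: "C2_on S g \<Longrightarrow> open T \<Longrightarrow> T \<subseteq> S \<Longrightarrow> C2_on T g"
  unfolding C2_on_def using Ck_on_subset by blast

lemma has_real_derivative_along_line:
  fixes g :: "real^'n \<Rightarrow> real"
  assumes "g differentiable (at (a + t *\<^sub>R v))"
  shows "((\<lambda>t. g (a + t *\<^sub>R v)) has_real_derivative (grad g (a + t *\<^sub>R v) \<bullet> v)) (at t)"
proof -
  have "((\<lambda>t. a + t *\<^sub>R v) has_derivative (\<lambda>h. h *\<^sub>R v)) (at t)"
    by (auto intro!: derivative_eq_intros)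
  from diff_chain_at[OF this has_derivative_grad[OF assms]] show ?thesis
    unfolding has_field_derivative_def o_def
    by (rule has_derivative_eq_rhs) (simp add: fun_eq_iff inner_scaleR_right)
qed

lemma mean_value_grad:
  fixes g :: "real^'n \<Rightarrow> real"
  assumes "\<And>t. 0 \<le> t \<Longrightarrow> t \<le> 1 \<Longrightarrow> g differentiable (at (a + t *\<^sub>R (b - a)))"
  obtains t where "0 < t" "t < 1" "g b - g a = grad g (a + t *\<^sub>R (b - a)) \<bullet> (b - a)"
proof -
  have "\<exists>t::real. 0 < t \<and> t < 1 \<and> g (a + 1 *\<^sub>R (b - a)) - g (a + 0 *\<^sub>R (b - a))
          = (1 - 0) * (grad g (a + t *\<^sub>R (b - a)) \<bullet> (b - a))"
    by (rule MVT2[where f = "\<lambda>t. g (a + t *\<^sub>R (b - a))"])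
      (auto intro!: has_real_derivative_along_line assms)
  then show ?thesis using that by auto
qed

section \<open>Functions of the distance to a point\<close>

definition sqdist :: "real^'n \<Rightarrow> real^'n \<Rightarrow> real" where
  "sqdist c z = (z - c) \<bullet> (z - c)"

lemma sqdist_eq_dist_sq: "sqdist c z = (dist z c)^2"
  by (simp add: sqdist_def dist_norm power2_norm_eq_inner)

lemma has_derivative_sqdist: "(sqdist c has_derivative (\<lambda>v. 2 * ((z - c) \<bullet> v))) (at z)"
  unfolding sqdist_def
  by (auto intro!: derivative_eq_intros simp: inner_commute)

lemma has_derivative_real_comp:
  fixes h :: "real^'n \<Rightarrow> real"
  assumes "(h has_derivative H) (at z)" "(F has_real_derivative D) (at (h z))"
  shows "((\<lambda>z. F (h z)) has_derivative (\<lambda>v. D * H v)) (at z)"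
  using diff_chain_at[OF assms(1) assms(2)[unfolded has_field_derivative_def]]
  by (simp add: o_def)

locale radial_function =
  fixes S :: "(real^'n) set" and c :: "real^'n" and F F' F'' :: "real \<Rightarrow> real"
  assumes open_S: "open S"
    and F': "\<And>z. z \<in> S \<Longrightarrow> (F has_real_derivative F' (sqdist c z)) (at (sqdist c z))"
    and F'': "\<And>z. z \<in> S \<Longrightarrow> (F' has_real_derivative F'' (sqdist c z)) (at (sqdist c z))"
    and F''_cont: "\<And>z. z \<in> S \<Longrightarrow> isCont F'' (sqdist c z)"
begin

definition rad :: "real^'n \<Rightarrow> real" where
  "rad z = F (sqdist c z)"

lemma has_derivative_rad:
  "z \<in> S \<Longrightarrow> (rad has_derivative (\<lambda>v. F' (sqdist c z) * (2 * ((z - c) \<bullet> v)))) (at z)"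
  unfolding rad_def[abs_def] by (rule has_derivative_real_comp[OF has_derivative_sqdist F'])

lemma pderiv_rad: "z \<in> S \<Longrightarrow> pderiv rad i z = 2 * F' (sqdist c z) * (z - c)$i"
  by (subst pderiv_eq_if_has_derivative[OF open_S _ _ has_derivative_rad]) (auto simp: inner_axis)

lemma has_derivative_pderiv_rad:
  assumes z: "z \<in> S"
  shows "(pderiv rad i has_derivative (\<lambda>v. 2 * F' (sqdist c z) * v$i
            + 4 * F'' (sqdist c z) * ((z - c) \<bullet> v) * (z - c)$i)) (at z)"
proof -
  have "((\<lambda>z. 2 * F' (sqdist c z)) has_derivative (\<lambda>v. 2 * (F'' (sqdist c z) * (2 * ((z - c) \<bullet> v))))) (at z)"
    using has_derivative_mult_right[OF has_derivative_real_comp[OF has_derivative_sqdist F''[OF z]], of 2]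
    by simp
  moreover have "((\<lambda>z. (z - c)$i) has_derivative (\<lambda>v. v$i)) (at z)"
    by (auto intro!: derivative_eq_intros bounded_linear_imp_has_derivative)
  ultimately have "((\<lambda>z. 2 * F' (sqdist c z) * (z - c)$i) has_derivative (\<lambda>v. 2 * F' (sqdist c z) * v$i
      + 2 * (F'' (sqdist c z) * (2 * ((z - c) \<bullet> v))) * (z - c)$i)) (at z)"
    by (rule has_derivative_mult)
  then show ?thesis
    by (rule has_derivative_transform_within_open[OF _ open_S z, THEN has_derivative_eq_rhs])
      (auto simp: pderiv_rad fun_eq_iff algebra_simps)
qed

lemma pderiv2_rad: "z \<in> S \<Longrightarrow> pderiv (pderiv rad i) j z =
    4 * F'' (sqdist c z) * (z - c)$i * (z - c)$j + 2 * F' (sqdist c z) * (if i = j then 1 else 0)"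
  by (subst pderiv_eq_if_has_derivative[OF open_S _ _ has_derivative_pderiv_rad])
    (auto simp: inner_axis, simp add: axis_def)

lemma C2_on_rad: "C2_on S rad"
proof -
  have F'_cont: "isCont (\<lambda>z. F' (sqdist c z)) z" if "z \<in> S" for z
    by (rule isCont_o2[OF has_derivative_continuous[OF has_derivative_sqdist]])
      (use F''[OF that] DERIV_isCont in blast)
  have F''_cont: "isCont (\<lambda>z. F'' (sqdist c z)) z" if "z \<in> S" for z
    by (rule isCont_o2[OF has_derivative_continuous[OF has_derivative_sqdist] F''_cont[OF that]])
  have diff: "rad differentiable (at z)" "pderiv rad i differentiable (at z)" if "z \<in> S" for z i
    using has_derivative_rad[OF that] has_derivative_pderiv_rad[OF that] differentiable_def by blast+
  have "continuous_on S (pderiv (pderiv rad i) j)" for i j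
  proof -
    have "continuous_on S (\<lambda>z. 4 * F'' (sqdist c z) * (z - c)$i * (z - c)$j
            + 2 * F' (sqdist c z) * (if i = j then 1 else 0))"
      using F'_cont F''_cont by (intro continuous_at_imp_continuous_on ballI continuous_intros) auto
    then show ?thesis by (rule continuous_on_eq) (simp add: pderiv2_rad)
  qed
  then show ?thesis
    unfolding C2_on_def numeral_2_eq_2 Ck_on.simps using open_S diff
    by (auto intro!: continuous_at_imp_continuous_on differentiable_imp_continuous_within)
qed

lemma grad_rad: "z \<in> S \<Longrightarrow> grad rad z = (2 * F' (sqdist c z)) *\<^sub>R (z - c)"
  by (simp add: grad_def pderiv_rad vec_eq_iff)

lemma hess_rad: "z \<in> S \<Longrightarrow> hess rad z = (4 * F'' (sqdist c z)) *\<^sub>R (\<chi> i j. (z - c)$i * (z - c)$j)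
   + (2 * F' (sqdist c z)) *\<^sub>R mat 1"
  by (simp add: hess_def pderiv2_rad vec_eq_iff mat_def)

lemma conf_hess_rad:
  assumes z: "z \<in> S"
  defines "n \<equiv> real CARD('n)" and "s \<equiv> sqdist c z" and "v \<equiv> F (sqdist c z)"
  shows "conf_hess rad z =
    (- (2 / (n - 2)) * v powr (- (n + 2) / (n - 2)) * (4 * F'' s)
      + (2 * n) / (n - 2)^2 * v powr (- (2 * n) / (n - 2)) * (4 * (F' s)^2))
        *\<^sub>R (\<chi> i j. (z - c)$i * (z - c)$j)
    + (- (2 / (n - 2)) * v powr (- (n + 2) / (n - 2)) * (2 * F' s)
      - (2 / (n - 2)^2) * v powr (- (2 * n) / (n - 2)) * (4 * (F' s)^2 * s)) *\<^sub>R mat 1"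
proof -
  have g: "(norm (grad rad z))^2 = 4 * (F' s)^2 * s"
    unfolding grad_rad[OF z] s_def sqdist_def
    by (simp add: power_mult_distrib power2_norm_eq_inner[symmetric])
  have G: "(\<chi> i j. grad rad z $ i * grad rad z $ j)
      = (4 * (F' s)^2) *\<^sub>R (\<chi> i j. (z - c)$i * (z - c)$j)"
    unfolding grad_rad[OF z] s_def by (simp add: vec_eq_iff power2_eq_square)
  show ?thesis
    unfolding conf_hess_def Let_def G g hess_rad[OF z] n_def[symmetric] s_def[symmetric]
    by (simp add: rad_def v_def s_def scaleR_add_right scaleR_add_left scaleR_diff_left algebra_simps)
qed

end

section \<open>The canonical solutions\<close>

text \<open>With \<open>e = -1\<close> this is the profile of \<open>u_in\<close>, with \<open>e = 1\<close> that of \<open>u_out\<close>, as a function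
  of the squared distance \<open>s\<close> to the centre.\<close>
definition canon_profile :: "real \<Rightarrow> real \<Rightarrow> real \<Rightarrow> real \<Rightarrow> real \<Rightarrow> real" where
  "canon_profile e a r k s = a * (r / (e * (s - r^2))) powr k"

definition canon_profile' :: "real \<Rightarrow> real \<Rightarrow> real \<Rightarrow> real \<Rightarrow> real \<Rightarrow> real" where
  "canon_profile' e a r k s = - e * k * canon_profile e a r k s / (e * (s - r^2))"

definition canon_profile'' :: "real \<Rightarrow> real \<Rightarrow> real \<Rightarrow> real \<Rightarrow> real \<Rightarrow> real" where
  "canon_profile'' e a r k s = k * (k + 1) * canon_profile e a r k s / (e * (s - r^2))^2"

lemma has_real_derivative_canon_profile:
  assumes e: "e = 1 \<or> e = -1" and r: "r > 0" and X: "e * (s - r^2) > 0"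
  shows "(canon_profile e a r k has_real_derivative canon_profile' e a r k s) (at s)"
proof -
  define X where "X = e * (s - r^2)"
  have X0: "X > 0" using X by (simp add: X_def)
  have "((\<lambda>s. a * (r / (e * (s - r^2))) powr k) has_real_derivative
     a * (k * (r / X) powr (k - 1) * (- r * e / X^2))) (at s)"
    unfolding X_def using X r e
    by (auto intro!: derivative_eq_intros simp: power2_eq_square field_simps)
  moreover have "(r / X) powr (k - 1) = (r / X) powr k * (X / r)"
    using X0 r by (simp add: powr_diff)
  ultimately show ?thesis
    unfolding canon_profile_def canon_profile'_def X_def[symmetric]
    using X0 r by (simp add: power2_eq_square field_simps)
qed

lemma has_real_derivative_canon_profile':
  assumes e: "e = 1 \<or> e = -1" and r: "r > 0" and X: "e * (s - r^2) > 0"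
  shows "(canon_profile' e a r k has_real_derivative canon_profile'' e a r k s) (at s)"
proof -
  define X where "X = e * (s - r^2)"
  define G where "G = canon_profile e a r k s"
  have "((\<lambda>s. (- e * k) * canon_profile e a r k s / (e * (s - r^2))) has_real_derivative
      (((- e * k) * canon_profile' e a r k s) * X - e * ((- e * k) * G)) / X ^ Suc (Suc 0)) (at s)"
    unfolding X_def G_def
    by (rule DERIV_quotient[OF DERIV_cmult[OF has_real_derivative_canon_profile[OF e r X]]])
      (use X in \<open>auto intro!: derivative_eq_intros\<close>)
  moreover have "(((- e * k) * canon_profile' e a r k s) * X - e * ((- e * k) * G)) / X ^ Suc (Suc 0)
      = canon_profile'' e a r k s"
    using e X unfolding canon_profile'_def canon_profile''_def X_def[symmetric] G_def[symmetric]
    by (elim disjE) (simp_all add: field_simps power2_eq_square)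
  ultimately show ?thesis unfolding canon_profile'_def by simp
qed

lemma isCont_canon_profile'':
  assumes e: "e = 1 \<or> e = -1" and r: "r > 0" and X: "e * (s - r^2) > 0"
  shows "isCont (canon_profile'' e a r k) s"
proof -
  have "isCont (canon_profile e a r k) s"
    using has_real_derivative_canon_profile[OF e r X] DERIV_isCont by blast
  then show ?thesis unfolding canon_profile''_def using X by (auto intro!: continuous_intros)
qed

lemma canon_coeff_rank_one_aux:
  fixes V v X k e :: real
  assumes "v > 0" "X > 0" "k > 0" "e * e = 1"
  shows "- (2 / (2 * k + 2 - 2)) * (V / v) * (4 * (k * (k + 1) * v / X^2))
      + (2 * (2 * k + 2)) / (2 * k + 2 - 2)^2 * (V / v^2) * (4 * (- e * k * v / X)^2) = 0"
proof -
  have sq: "(- e * k * v / X)^2 = k^2 * v^2 / X^2"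
  proof -
    have "(- e * k * v / X)^2 = (e * e) * (k^2 * v^2 / X^2)" by (simp add: power2_eq_square field_simps)
    then show ?thesis using assms by simp
  qed
  show ?thesis unfolding sq using assms by (simp add: power2_eq_square field_simps)
qed

lemma canon_coeff_identity_aux:
  fixes V v X k e a r :: real
  assumes "v > 0" "X > 0" "k > 0" "e * e = 1" "r > 0"
  shows "- (2 / (2 * k + 2 - 2)) * (V * (X / r)^2 / v) * (2 * (- e * k * v / X))
      - (2 / (2 * k + 2 - 2)^2) * (V * (X / r)^2 / v^2) * (4 * (- e * k * v / X)^2 * (e * X + r^2))
      = - 2 * V"
proof -
  have sq: "(- e * k * v / X)^2 = k^2 * v^2 / X^2"
  proof -
    have "(- e * k * v / X)^2 = (e * e) * (k^2 * v^2 / X^2)" by (simp add: power2_eq_square field_simps)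
    then show ?thesis using assms by simp
  qed
  show ?thesis unfolding sq using assms by (simp add: power2_eq_square field_simps)
qed

text \<open>The two coefficients of \<open>conf_hess_rad\<close> for the canonical profile: the rank-one part
  vanishes and the identity part is independent of the point.\<close>
lemma canon_conf_hess_coeffs:
  fixes n k a r X e s v :: real
  assumes n: "n > 2" and k: "k = (n - 2) / 2" and a: "a > 0" and r: "r > 0" and X: "X > 0"
    and e: "e = 1 \<or> e = -1" and Xs: "X = e * (s - r^2)" and v: "v = a * (r / X) powr k"
  shows "- (2 / (n - 2)) * v powr (- (n + 2) / (n - 2)) * (4 * (k * (k + 1) * v / X^2))
      + (2 * n) / (n - 2)^2 * v powr (- (2 * n) / (n - 2)) * (4 * (- e * k * v / X)^2) = 0"
    and "- (2 / (n - 2)) * v powr (- (n + 2) / (n - 2)) * (2 * (- e * k * v / X))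
      - (2 / (n - 2)^2) * v powr (- (2 * n) / (n - 2)) * (4 * (- e * k * v / X)^2 * s)
      = - 2 * a powr (- 4 / (n - 2))"
proof -
  define q where "q = - 4 / (n - 2)"
  have v0: "v > 0" using v a r X by simp
  have p1: "v powr (- (n + 2) / (n - 2)) = v powr q / v"
  proof -
    have "- (n + 2) / (n - 2) = q - 1" using n by (simp add: q_def field_simps)
    then show ?thesis using v0 by (simp add: powr_diff)
  qed
  have p2: "v powr (- (2 * n) / (n - 2)) = v powr q / v^2"
  proof -
    have "- (2 * n) / (n - 2) = q - 2" using n by (simp add: q_def field_simps)
    then show ?thesis using v0 by (simp add: powr_diff)
  qed
  have vq: "v powr q = a powr q * (X / r)^2"
  proof -
    have "v powr q = a powr q * ((r / X) powr k) powr q" using v a r X by (simp add: powr_mult)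
    also have "((r / X) powr k) powr q = (r / X) powr (k * q)"
      by (simp add: powr_powr)
    also have "k * q = -2" using n by (simp add: k q_def field_simps)
    also have "(r / X) powr (-2) = (X / r)^2" using r X
      by (simp add: powr_minus powr_divide power_divide)
    finally show ?thesis .
  qed
  have ee: "e * e = 1" using e by auto
  have nk: "n - 2 = 2 * k" "n = 2 * k + 2" using k by auto
  have k0: "k > 0" using n k by simp
  show "- (2 / (n - 2)) * v powr (- (n + 2) / (n - 2)) * (4 * (k * (k + 1) * v / X^2))
      + (2 * n) / (n - 2)^2 * v powr (- (2 * n) / (n - 2)) * (4 * (- e * k * v / X)^2) = 0"
    unfolding p1 p2 unfolding nk(2) using canon_coeff_rank_one_aux[OF v0 X k0 ee, of "v powr q"] by simp
  have "e * X = (e * e) * (s - r^2)" using Xs by simp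
  then have "e * X = s - r^2" using ee by simp
  then have s: "s = e * X + r^2" by simp
  show "- (2 / (n - 2)) * v powr (- (n + 2) / (n - 2)) * (2 * (- e * k * v / X))
      - (2 / (n - 2)^2) * v powr (- (2 * n) / (n - 2)) * (4 * (- e * k * v / X)^2 * s)
      = - 2 * a powr (- 4 / (n - 2))"
    unfolding p1 p2 vq q_def[symmetric] s unfolding nk(2) using canon_coeff_identity_aux[OF v0 X k0 ee r, of "a powr q"] by simp
qed

definition canon :: "real \<Rightarrow> real \<Rightarrow> real \<Rightarrow> real^'n::finite \<Rightarrow> real^'n \<Rightarrow> real" where
  "canon e a r c z = canon_profile e a r ((real CARD('n) - 2) / 2) (sqdist c z)"

definition canon_domain :: "real \<Rightarrow> real \<Rightarrow> real^'n \<Rightarrow> (real^'n) set" where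
  "canon_domain e r c = {z. 0 < e * (sqdist c z - r^2)}"

lemma u_in_eq_canon: "u_in TYPE('n::finite) a r c = canon (-1) a r c"
  by (simp add: fun_eq_iff u_in_def canon_def canon_profile_def sqdist_eq_dist_sq)

lemma canon_scale: "canon e (t * a) r c z = t * canon e a r c z"
  by (simp add: canon_def canon_profile_def)

lemma open_canon_domain: "open (canon_domain e r c)"
  unfolding canon_domain_def
  by (rule open_Collect_less) (auto simp: sqdist_def intro!: continuous_intros)

lemma ball_subset_canon_domain: "ball c r \<subseteq> canon_domain (-1) r c"
  by (auto simp: canon_domain_def sqdist_eq_dist_sq dist_commute power_strict_mono)

lemma radial_function_canon:
  fixes c :: "real^'n::finite"
  assumes e: "e = 1 \<or> e = -1" and r: "r > 0"
  shows "radial_function (canon_domain e r c) c (canon_profile e a r k)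
           (canon_profile' e a r k) (canon_profile'' e a r k)"
proof
  fix z assume "z \<in> canon_domain e r c"
  then have X: "e * (sqdist c z - r^2) > 0" by (simp add: canon_domain_def)
  show "(canon_profile e a r k has_real_derivative canon_profile' e a r k (sqdist c z)) (at (sqdist c z))"
    by (rule has_real_derivative_canon_profile[OF e r X])
  show "(canon_profile' e a r k has_real_derivative canon_profile'' e a r k (sqdist c z)) (at (sqdist c z))"
    by (rule has_real_derivative_canon_profile'[OF e r X])
  show "isCont (canon_profile'' e a r k) (sqdist c z)"
    by (rule isCont_canon_profile''[OF e r X])
qed (rule open_canon_domain)

lemma C2_on_canon:
  fixes c :: "real^'n::finite"
  assumes "e = 1 \<or> e = -1" "r > 0"
  shows "C2_on (canon_domain e r c) (canon e a r c)"
proof -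
  interpret radial_function "canon_domain e r c" c "canon_profile e a r ((real CARD('n) - 2) / 2)"
      "canon_profile' e a r ((real CARD('n) - 2) / 2)" "canon_profile'' e a r ((real CARD('n) - 2) / 2)"
    by (rule radial_function_canon[OF assms])
  have "rad = canon e a r c" by (simp add: fun_eq_iff rad_def canon_def)
  then show ?thesis using C2_on_rad by simp
qed

lemma conf_hess_canon:
  fixes c :: "real^'n::finite"
  assumes n: "CARD('n) \<ge> 3" and e: "e = 1 \<or> e = -1" and r: "r > 0" and a: "a > 0"
    and z: "z \<in> canon_domain e r c"
  shows "- conf_hess (canon e a r c) z = (2 * a powr (- 4 / (real CARD('n) - 2))) *\<^sub>R mat 1"
proof -
  define k where "k = (real CARD('n) - 2) / 2"
  interpret radial_function "canon_domain e r c" c "canon_profile e a r k"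
      "canon_profile' e a r k" "canon_profile'' e a r k"
    by (rule radial_function_canon[OF e r])
  have rad: "rad = canon e a r c" by (simp add: fun_eq_iff rad_def canon_def flip: k_def)
  define s where "s = sqdist c z"
  define X where "X = e * (s - r^2)"
  define n where "n = real CARD('n)"
  have X: "X > 0" using z by (simp add: X_def s_def canon_domain_def)
  have v: "canon_profile e a r k s = a * (r / X) powr k" by (simp add: canon_profile_def X_def)
  have F': "canon_profile' e a r k s = - e * k * canon_profile e a r k s / X"
    by (simp add: canon_profile'_def X_def)
  have F'': "canon_profile'' e a r k s = k * (k + 1) * canon_profile e a r k s / X^2"
    by (simp add: canon_profile''_def X_def)
  have "n > 2" "k = (n - 2) / 2" using n by (simp_all add: n_def k_def)
  note coeffs = canon_conf_hess_coeffs[OF this a r X e X_def v]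
  have "conf_hess (canon e a r c) z = 0 *\<^sub>R (\<chi> i j. (z - c)$i * (z - c)$j)
       + (- 2 * a powr (- 4 / (n - 2))) *\<^sub>R mat 1"
    using conf_hess_rad[OF z] unfolding rad n_def[symmetric] s_def[symmetric] F' F'' coeffs by simp
  then show ?thesis by (simp add: n_def)
qed

lemma eigvals_scalar_mat: "eigvals (c *\<^sub>R (mat 1 :: real^'n^'n)) = (\<chi> i. c)"
proof -
  let ?M = "c *\<^sub>R (mat 1 :: real^'n^'n)"
  have "diag_mat (\<chi> i. c) = ?M"
    by (simp add: diag_mat_def vec_eq_iff mat_def)
  then have "\<exists>l P. orthogonal_matrix P \<and> ?M = P ** diag_mat l ** transpose P"
    by (intro exI[of _ "\<chi> i. c"] exI[of _ "mat 1"]) (simp add: orthogonal_matrix_id)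
  then have "\<exists>P. orthogonal_matrix P \<and> ?M = P ** diag_mat (eigvals ?M) ** transpose P"
    unfolding eigvals_def by (rule someI_ex)
  then obtain P where P: "orthogonal_matrix P" and M: "?M = P ** diag_mat (eigvals ?M) ** transpose P"
    by blast
  have PP: "transpose P ** P = mat 1"
    using P by (simp add: orthogonal_matrix_def)
  have "diag_mat (eigvals ?M) = (transpose P ** P) ** diag_mat (eigvals ?M) ** (transpose P ** P)"
    by (simp add: PP)
  also have "\<dots> = transpose P ** ?M ** P"
    by (subst M) (simp add: matrix_mul_assoc)
  also have "\<dots> = ?M"
    by (simp add: matrix_scalar_ac scalar_matrix_assoc[symmetric] PP)
  finally have "diag_mat (eigvals ?M) $ i $ i = ?M $ i $ i" for i by simp
  then show ?thesis by (simp add: vec_eq_iff diag_mat_def mat_def)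
qed

lemma lam_neg_A_canon:
  fixes c :: "real^'n::finite"
  assumes "CARD('n) \<ge> 3" "e = 1 \<or> e = -1" "r > 0" "a > 0" "z \<in> canon_domain e r c"
  shows "lam_neg_A (canon e a r c) z = (\<chi> i. 2 * a powr (- 4 / (real CARD('n) - 2)))"
  unfolding lam_neg_A_def conf_hess_canon[OF assms] by (rule eigvals_scalar_mat)

section \<open>Comparison with the canonical solutions\<close>

lemma touches_above_if_le_on_open:
  assumes "open S" "S \<subseteq> \<Omega>" "C2_on S \<phi>" "\<And>x. x \<in> S \<Longrightarrow> u x \<le> \<phi> x" "y \<in> S" "\<phi> y = u y"
  shows "touches_above \<phi> u \<Omega> y"
proof -
  obtain \<epsilon> where "\<epsilon> > 0" "ball y \<epsilon> \<subseteq> S" using assms(1,5) open_contains_ball by blast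
  then show ?thesis
    using assms C2_on_subset[OF assms(3) open_ball] unfolding touches_above_def by blast
qed

lemma touches_below_if_ge_on_open:
  assumes "open S" "S \<subseteq> \<Omega>" "C2_on S \<phi>" "\<And>x. x \<in> S \<Longrightarrow> \<phi> x \<le> u x" "y \<in> S" "\<phi> y = u y"
  shows "touches_below \<phi> u \<Omega> y"
proof -
  obtain \<epsilon> where "\<epsilon> > 0" "ball y \<epsilon> \<subseteq> S" using assms(1,5) open_contains_ball by blast
  then show ?thesis
    using assms C2_on_subset[OF assms(3) open_ball] unfolding touches_below_def by blast
qed

lemma closure_scaleR_mem:
  assumes "\<forall>l\<in>\<Gamma>. \<forall>t>0. t *\<^sub>R l \<in> \<Gamma>" "l \<in> closure \<Gamma>" "(t::real) > 0"
  shows "t *\<^sub>R l \<in> closure (\<Gamma> :: (real^'n) set)"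
proof -
  have "t *\<^sub>R l \<in> (*\<^sub>R) t ` closure \<Gamma>" using assms(2) by blast
  also have "\<dots> = closure ((*\<^sub>R) t ` \<Gamma>)" by (rule closure_scaleR)
  also have "\<dots> \<subseteq> closure \<Gamma>" using assms(1,3) by (intro closure_mono) auto
  finally show ?thesis .
qed

lemma ball_infdist_frontier_subset:
  fixes \<Omega> :: "'a::euclidean_space set"
  assumes "open \<Omega>" "x \<in> \<Omega>"
  shows "ball x (infdist x (frontier \<Omega>)) \<subseteq> \<Omega>"
proof (rule ccontr)
  assume "\<not> ?thesis"
  then have out: "ball x (infdist x (frontier \<Omega>)) - \<Omega> \<noteq> {}" by blast
  then have "infdist x (frontier \<Omega>) > 0"
    by (metis Diff_eq_empty_iff ball_eq_empty empty_subsetI not_less)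
  then have "ball x (infdist x (frontier \<Omega>)) \<inter> \<Omega> \<noteq> {}"
    using assms(2) centre_in_ball by blast
  then obtain z where "z \<in> ball x (infdist x (frontier \<Omega>))" "z \<in> frontier \<Omega>"
    using connected_Int_frontier[OF connected_ball _ out] by blast
  then show False using infdist_le[of z "frontier \<Omega>" x] by (simp add: dist_commute)
qed

lemma continuous_attains_inf_boundary_layer:
  fixes g :: "'a::euclidean_space \<Rightarrow> real"
  assumes "bounded \<Omega>" "continuous_on \<Omega> g" "y \<in> \<Omega>" "\<delta> > 0"
    and near: "\<And>z. z \<in> \<Omega> \<Longrightarrow> infdist z (frontier \<Omega>) < \<delta> \<Longrightarrow> g y < g z"
  obtains y1 where "y1 \<in> \<Omega>" "\<And>z. z \<in> \<Omega> \<Longrightarrow> g y1 \<le> g z"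
proof -
  define K where "K = closure \<Omega> \<inter> {z. \<delta> \<le> infdist z (frontier \<Omega>)}"
  have K_sub: "K \<subseteq> \<Omega>"
    using assms(4) closure_Un_frontier by (fastforce simp: K_def)
  have "closed {z. \<delta> \<le> infdist z (frontier \<Omega>)}"
    by (rule closed_Collect_le) (auto intro!: continuous_intros)
  then have "compact K"
    unfolding K_def compact_eq_bounded_closed using assms(1) by blast
  moreover have "y \<in> K"
    using near[OF assms(3)] assms(3) closure_subset by (force simp: K_def)
  ultimately obtain y1 where y1: "y1 \<in> K" "\<And>z. z \<in> K \<Longrightarrow> g y1 \<le> g z"
    using continuous_attains_inf[OF _ _ continuous_on_subset[OF assms(2) K_sub]] by blast
  have "g y1 \<le> g z" if "z \<in> \<Omega>" for z
  proof (cases "z \<in> K")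
    case False
    then have "infdist z (frontier \<Omega>) < \<delta>" using that closure_subset by (force simp: K_def)
    then show ?thesis using near[OF that] y1(2)[OF \<open>y \<in> K\<close>] by simp
  qed (use y1 in simp)
  then show ?thesis using that y1(1) K_sub by blast
qed

locale canonical_equation =
  fixes f :: "real^'n::finite \<Rightarrow> real" and \<Gamma> :: "(real^'n) set" and \<alpha> :: real
  assumes dim: "CARD('n) \<ge> 3"
    and structural: "structural f \<Gamma>"
    and canonical: "canonical_const f \<Gamma> \<alpha>"
begin

definition \<kappa> :: real where
  "\<kappa> = (real CARD('n) - 2) / 2"

text \<open>The common value of \<open>\<lambda>(-A\<^sup>u)\<close> along every canonical solution with constant \<open>\<alpha>\<close>.\<close>
definition lam0 :: "real^'n" where
  "lam0 = (\<chi> i. 2 * \<alpha> powr (- 4 / (real CARD('n) - 2)))"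

lemma alpha_pos: "\<alpha> > 0"
  using canonical by (simp add: canonical_const_def)

lemma kappa_pos: "\<kappa> > 0"
  using dim by (simp add: \<kappa>_def)

lemma canon_eq:
  fixes c :: "real^'n"
  shows "canon e a r c y = a * (r / (e * ((dist y c)^2 - r^2))) powr \<kappa>"
  by (simp add: canon_def canon_profile_def \<kappa>_def sqdist_eq_dist_sq)

lemma lam0_in_closure_f_eq_one: "lam0 \<in> closure \<Gamma>" "f lam0 = 1"
proof -
  have "classical_solution f \<Gamma> (u_in TYPE('n) \<alpha> 1 0) (ball 0 1)"
    using canonical by (simp add: canonical_const_def)
  then have "lam_neg_A (canon (-1) \<alpha> 1 0) 0 \<in> closure \<Gamma> \<and> f (lam_neg_A (canon (-1) \<alpha> 1 0) 0) = 1"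
    unfolding classical_solution_def u_in_eq_canon by (metis centre_in_ball zero_less_one)
  moreover have "lam_neg_A (canon (-1) \<alpha> 1 (0::real^'n)) 0 = lam0"
    unfolding lam0_def using lam_neg_A_canon[OF dim _ _ alpha_pos, of "-1" 1 0 0]
    by (simp add: canon_domain_def sqdist_def)
  ultimately show "lam0 \<in> closure \<Gamma>" "f lam0 = 1" by auto
qed

lemma lam_neg_A_canon_scaled:
  assumes "e = 1 \<or> e = -1" "r > 0" "t > 0" "z \<in> canon_domain e r c"
  shows "lam_neg_A (canon e (t * \<alpha>) r c) z = t powr (- 4 / (real CARD('n) - 2)) *\<^sub>R lam0"
  using lam_neg_A_canon[OF dim assms(1,2) _ assms(4), of "t * \<alpha>"] assms(3) alpha_pos
  by (simp add: lam0_def powr_mult vec_eq_iff)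

lemma lam_neg_A_canon_scaled_mem:
  assumes "e = 1 \<or> e = -1" "r > 0" "t > 0" "z \<in> canon_domain e r c"
  shows "lam_neg_A (canon e (t * \<alpha>) r c) z \<in> closure \<Gamma>"
proof -
  have "\<forall>l\<in>\<Gamma>. \<forall>s>0. s *\<^sub>R l \<in> \<Gamma>"
    using structural unfolding structural_def by blast
  from closure_scaleR_mem[OF this lam0_in_closure_f_eq_one(1)] show ?thesis
    unfolding lam_neg_A_canon_scaled[OF assms] using assms(3) by simp
qed

lemma f_lam_neg_A_canon_scaled:
  obtains p where "p < 0" "\<And>e r t z c. e = 1 \<or> e = -1 \<Longrightarrow> r > 0 \<Longrightarrow> t > 0 \<Longrightarrow>
    z \<in> canon_domain e r c \<Longrightarrow> f (lam_neg_A (canon e (t * \<alpha>) r c) z) = t powr p"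
proof -
  obtain d where d: "d > 0" "\<And>l s. l \<in> closure \<Gamma> \<Longrightarrow> s > 0 \<Longrightarrow> f (s *\<^sub>R l) = s powr d * f l"
    using structural unfolding structural_def by metis
  define q where "q = - 4 / (real CARD('n) - 2)"
  have "q * d < 0" using dim d(1) by (simp add: q_def mult_neg_pos)
  moreover have "f (lam_neg_A (canon e (t * \<alpha>) r c) z) = t powr (q * d)"
    if "e = 1 \<or> e = -1" "r > 0" "t > 0" "z \<in> canon_domain e r c" for e r t z c
    unfolding lam_neg_A_canon_scaled[OF that] q_def[symmetric]
    using d(2)[OF lam0_in_closure_f_eq_one(1)] lam0_in_closure_f_eq_one(2) that(3) by (simp add: powr_powr)
  ultimately show ?thesis using that by blast
qed

lemma canon_touches_above_scale_le_one:
  assumes sub: "visc_sub f \<Gamma> u \<Omega>" and y: "y \<in> \<Omega>" "y \<in> canon_domain e r c"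
    and e: "e = 1 \<or> e = -1" and r: "r > 0" and t: "t > 0"
    and touch: "touches_above (canon e (t * \<alpha>) r c) u \<Omega> y"
  shows "t \<le> 1"
proof (rule ccontr)
  obtain p where p: "p < 0" "f (lam_neg_A (canon e (t * \<alpha>) r c) y) = t powr p"
    using f_lam_neg_A_canon_scaled[of thesis] e r t y(2) by metis
  assume "\<not> t \<le> 1"
  then have "f (lam_neg_A (canon e (t * \<alpha>) r c) y) < 1"
    using p powr_less_one by simp
  then show False
    using sub touch y unfolding visc_sub_def by force
qed

lemma canon_touches_below_scale_ge_one:
  assumes super: "visc_super f \<Gamma> u \<Omega>" and y: "y \<in> \<Omega>" "y \<in> canon_domain e r c"
    and e: "e = 1 \<or> e = -1" and r: "r > 0" and t: "t > 0"
    and touch: "touches_below (canon e (t * \<alpha>) r c) u \<Omega> y"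
  shows "1 \<le> t"
proof (rule ccontr)
  obtain p where p: "p < 0" "f (lam_neg_A (canon e (t * \<alpha>) r c) y) = t powr p"
    using f_lam_neg_A_canon_scaled[of thesis] e r t y(2) by metis
  assume "\<not> 1 \<le> t"
  then have "f (lam_neg_A (canon e (t * \<alpha>) r c) y) > 1"
    using p powr_less_mono2_neg[OF p(1) t, of 1] by simp
  then show False
    using super touch y lam_neg_A_canon_scaled_mem[OF e r t y(2)] unfolding visc_super_def by force
qed

lemma canon_in_weight:
  fixes c :: "real^'n"
  assumes r: "r > 0"
  defines "w \<equiv> \<lambda>z. (r^2 - (dist z c)^2) powr \<kappa> / (\<alpha> * r powr \<kappa>)"
  shows "continuous_on (cball c r) w"
    and "\<And>z. z \<in> ball c r \<Longrightarrow> canon (-1) \<alpha> r c z > 0 \<and> w z * canon (-1) \<alpha> r c z = 1"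
    and "\<And>z. z \<in> cball c r - ball c r \<Longrightarrow> w z = 0"
proof -
  have "continuous_on (cball c r) (\<lambda>z. (r^2 - (dist z c)^2) powr \<kappa>)"
    using kappa_pos r
    by (intro continuous_on_powr' continuous_intros) (auto simp: dist_commute power_mono)
  then show "continuous_on (cball c r) w"
    unfolding w_def using alpha_pos r by (intro continuous_on_divide continuous_on_const) auto
  show "canon (-1) \<alpha> r c z > 0 \<and> w z * canon (-1) \<alpha> r c z = 1" if z: "z \<in> ball c r" for z
  proof -
    have "dist z c < r" using z by (simp add: dist_commute)
    then have "(dist z c)^2 < r^2" by (simp add: power_strict_mono)
    then have pos: "(r^2 - (dist z c)^2) powr \<kappa> > 0" by simp
    have "canon (-1) \<alpha> r c z = \<alpha> * r powr \<kappa> / (r^2 - (dist z c)^2) powr \<kappa>"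
      by (simp add: canon_eq powr_divide)
    then show ?thesis using pos alpha_pos r by (simp add: w_def)
  qed
  show "w z = 0" if "z \<in> cball c r - ball c r" for z
  proof -
    have "dist z c = r" using that by (simp add: dist_commute)
    then show ?thesis using kappa_pos by (simp add: w_def)
  qed
qed

text \<open>Maximising \<open>u w = u / u_in\<close> over the closed ball (\<open>w\<close> vanishes on the sphere, where \<open>u_in\<close>
  blows up) produces a scaled canonical solution touching \<open>u\<close> from above.\<close>
lemma le_canon_in_cball:
  assumes sub: "visc_sub f \<Gamma> u \<Omega>" and cont: "continuous_on \<Omega> u"
    and r: "r > 0" and ball: "cball c r \<subseteq> \<Omega>" and y: "y \<in> ball c r"
  shows "u y \<le> canon (-1) \<alpha> r c y"
proof (rule ccontr)
  define v where "v = canon (-1) \<alpha> r c"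
  define w where "w z = (r^2 - (dist z c)^2) powr \<kappa> / (\<alpha> * r powr \<kappa>)" for z
  note weight = canon_in_weight[OF r, where c = c, folded w_def v_def]
  have "w y = 1 / v y" using weight(2)[OF y] by (simp add: field_simps)
  then have "w y > 0" using weight(2)[OF y] by simp
  assume "\<not> u y \<le> canon (-1) \<alpha> r c y"
  then have "u y * w y > v y * w y" using \<open>w y > 0\<close> by (simp add: v_def)
  then have "u y * w y > 1" using weight(2)[OF y] by (simp add: mult.commute)
  have "continuous_on (cball c r) (\<lambda>z. u z * w z)"
    using continuous_on_subset[OF cont ball] weight(1) by (rule continuous_on_mult)
  moreover have "cball c r \<noteq> {}" using r by simp
  ultimately obtain y1 where y1: "y1 \<in> cball c r" and max: "\<And>z. z \<in> cball c r \<Longrightarrow> u z * w z \<le> u y1 * w y1"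
    using continuous_attains_sup[OF compact_cball] by blast
  define t where "t = u y1 * w y1"
  have t1: "t > 1" using max[of y] y \<open>u y * w y > 1\<close> by (auto simp: t_def)
  then have y1_ball: "y1 \<in> ball c r" using y1 weight(3)[of y1] by (force simp: t_def)
  have touch: "touches_above (canon (-1) (t * \<alpha>) r c) u \<Omega> y1"
  proof (rule touches_above_if_le_on_open[OF open_ball _ _ _ y1_ball])
    show "ball c r \<subseteq> \<Omega>" using ball by auto
    show "C2_on (ball c r) (canon (-1) (t * \<alpha>) r c)"
      using C2_on_subset[OF C2_on_canon open_ball ball_subset_canon_domain] r by simp
    have cancel: "u z * w z * v z = u z" if "z \<in> ball c r" for z
      using weight(2)[OF that] by (metis mult.assoc mult.right_neutral)
    show "u z \<le> canon (-1) (t * \<alpha>) r c z" if "z \<in> ball c r" for z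
    proof -
      have "u z * w z * v z \<le> t * v z"
        using max[of z] that weight(2)[OF that] by (intro mult_right_mono) (auto simp: t_def)
      then show ?thesis unfolding cancel[OF that] by (simp add: canon_scale v_def)
    qed
    show "canon (-1) (t * \<alpha>) r c y1 = u y1"
      using cancel[OF y1_ball] unfolding canon_scale v_def t_def by simp
  qed
  have "t \<le> 1"
    by (rule canon_touches_above_scale_le_one[OF sub _ _ _ r _ touch])
      (use ball y1_ball ball_subset_canon_domain[of c r] t1 in auto)
  then show False using t1 by simp
qed

lemma le_canon_in_ball:
  assumes sub: "visc_sub f \<Gamma> u \<Omega>" and cont: "continuous_on \<Omega> u"
    and r: "r > 0" and ball: "ball c r \<subseteq> \<Omega>" and y: "y \<in> ball c r"
  shows "u y \<le> canon (-1) \<alpha> r c y"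
proof -
  define \<Phi> where "\<Phi> \<rho> = \<alpha> * (\<rho> / (\<rho>^2 - (dist y c)^2)) powr \<kappa>" for \<rho>
  have "dist y c < r" using y by (simp add: dist_commute)
  then have "(dist y c)^2 < r^2" by (simp add: power_strict_mono)
  then have "(\<Phi> \<longlongrightarrow> \<Phi> r) (at_left r)"
    unfolding \<Phi>_def using r by (intro tendsto_intros) auto
  moreover have "eventually (\<lambda>\<rho>. u y \<le> \<Phi> \<rho>) (at_left r)"
    using eventually_at_left_real[OF \<open>dist y c < r\<close>]
  proof (rule eventually_mono)
    fix \<rho> assume \<rho>: "\<rho> \<in> {dist y c<..<r}"
    then have "cball c \<rho> \<subseteq> \<Omega>" "y \<in> ball c \<rho>" "\<rho> > 0"
      using ball by (auto simp: dist_commute intro: le_less_trans[OF zero_le_dist])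
    from le_canon_in_cball[OF sub cont this(3,1,2)] show "u y \<le> \<Phi> \<rho>"
      by (simp add: canon_eq \<Phi>_def)
  qed
  ultimately have "u y \<le> \<Phi> r" by (rule tendsto_lowerbound) simp
  then show ?thesis by (simp add: canon_eq \<Phi>_def)
qed


lemma canon_out_bounded:
  fixes c :: "real^'n"
  assumes \<rho>: "0 < \<rho>" "\<rho> < r" and z: "r \<le> dist z c"
  shows "z \<in> canon_domain 1 \<rho> c" "0 < canon 1 \<alpha> \<rho> c z"
    "canon 1 \<alpha> \<rho> c z \<le> \<alpha> * (\<rho> / (r^2 - \<rho>^2)) powr \<kappa>"
proof -
  have gap: "\<rho>^2 < r^2" "r^2 \<le> (dist z c)^2"
    using \<rho> z by (auto simp: power_strict_mono power_mono)
  then show "z \<in> canon_domain 1 \<rho> c"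
    by (simp add: canon_domain_def sqdist_eq_dist_sq)
  show "0 < canon 1 \<alpha> \<rho> c z"
    using gap alpha_pos \<rho> by (simp add: canon_eq zero_less_mult_iff)
  have "\<rho> / ((dist z c)^2 - \<rho>^2) \<le> \<rho> / (r^2 - \<rho>^2)"
    using gap \<rho> by (intro divide_left_mono mult_pos_pos) linarith+
  then show "canon 1 \<alpha> \<rho> c z \<le> \<alpha> * (\<rho> / (r^2 - \<rho>^2)) powr \<kappa>"
    using gap \<rho> kappa_pos alpha_pos by (auto simp: canon_eq intro!: powr_mono2)
qed

text \<open>Minimising \<open>u / u_out\<close> produces a scaled canonical solution touching \<open>u\<close> from below; the
  minimum is attained in the interior because \<open>u\<close> blows up at \<open>\<partial>\<Omega>\<close> while \<open>u_out\<close>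
  stays bounded on \<open>\<Omega>\<close> when \<open>\<rho> < r\<close>.\<close>
lemma canon_le_outside_cball:
  assumes super: "visc_super f \<Gamma> u \<Omega>" and cont: "continuous_on \<Omega> u" and pos: "\<forall>x\<in>\<Omega>. u x > 0"
    and blowup: "\<forall>M. \<exists>\<delta>>0. \<forall>x\<in>\<Omega>. infdist x (frontier \<Omega>) < \<delta> \<longrightarrow> u x > M"
    and "open \<Omega>" "bounded \<Omega>"
    and \<rho>: "0 < \<rho>" "\<rho> < r" and far: "\<forall>z\<in>\<Omega>. r \<le> dist z c" and y: "y \<in> \<Omega>"
  shows "canon 1 \<alpha> \<rho> c y \<le> u y"
proof (rule ccontr)
  define v where "v = canon 1 \<alpha> \<rho> c"
  assume "\<not> canon 1 \<alpha> \<rho> c y \<le> u y"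
  then have lt: "u y < v y" by (simp add: v_def)
  define V where "V = \<alpha> * (\<rho> / (r^2 - \<rho>^2)) powr \<kappa>"
  have \<Omega>_sub: "\<Omega> \<subseteq> canon_domain 1 \<rho> c" and vpos: "\<And>z. z \<in> \<Omega> \<Longrightarrow> v z > 0"
    and v_le: "\<And>z. z \<in> \<Omega> \<Longrightarrow> v z \<le> V"
    using canon_out_bounded[OF \<rho>] far by (auto simp: v_def V_def)
  have v_cont: "continuous_on \<Omega> v"
    using C2_on_subset[OF C2_on_canon \<open>open \<Omega>\<close> \<Omega>_sub] \<rho>
    by (simp add: v_def C2_on_def numeral_2_eq_2)
  define t\<^sub>0 where "t\<^sub>0 = u y / v y"
  have t\<^sub>0: "0 < t\<^sub>0" "t\<^sub>0 < 1" using pos y vpos[OF y] lt by (auto simp: t\<^sub>0_def)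
  obtain \<delta> where \<delta>: "\<delta> > 0" "\<And>z. z \<in> \<Omega> \<Longrightarrow> infdist z (frontier \<Omega>) < \<delta> \<Longrightarrow> u z > t\<^sub>0 * V"
    using blowup by metis
  have "u z / v z > t\<^sub>0" if "z \<in> \<Omega>" "infdist z (frontier \<Omega>) < \<delta>" for z
  proof -
    have "t\<^sub>0 * v z \<le> t\<^sub>0 * V" using v_le[OF that(1)] t\<^sub>0 by simp
    then show ?thesis using \<delta>(2)[OF that] vpos[OF that(1)] by (simp add: field_simps)
  qed
  moreover have "continuous_on \<Omega> (\<lambda>z. u z / v z)"
    using cont v_cont vpos by (intro continuous_on_divide) force+
  ultimately obtain y1 where y1: "y1 \<in> \<Omega>" and min: "\<And>z. z \<in> \<Omega> \<Longrightarrow> u y1 / v y1 \<le> u z / v z"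
    using continuous_attains_inf_boundary_layer[OF \<open>bounded \<Omega>\<close> _ y \<delta>(1)]
    unfolding t\<^sub>0_def by blast
  define t where "t = u y1 / v y1"
  have "t \<le> t\<^sub>0" using min[OF y] by (simp add: t_def t\<^sub>0_def)
  moreover have "0 < t" using pos y1 vpos[OF y1] by (simp add: t_def)
  ultimately have t: "0 < t" "t < 1" using t\<^sub>0 by linarith+
  have touch: "touches_below (canon 1 (t * \<alpha>) \<rho> c) u \<Omega> y1"
  proof (rule touches_below_if_ge_on_open[OF \<open>open \<Omega>\<close> subset_refl _ _ y1])
    show "C2_on \<Omega> (canon 1 (t * \<alpha>) \<rho> c)"
      using C2_on_subset[OF C2_on_canon \<open>open \<Omega>\<close> \<Omega>_sub] \<rho> by simp
    show "canon 1 (t * \<alpha>) \<rho> c z \<le> u z" if "z \<in> \<Omega>" for z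
    proof -
      have "t * v z \<le> u z" using min[OF that] vpos[OF that] by (simp add: t_def field_simps)
      then show ?thesis by (simp add: canon_scale v_def)
    qed
    show "canon 1 (t * \<alpha>) \<rho> c y1 = u y1"
      using vpos[OF y1] unfolding canon_scale by (simp add: t_def v_def)
  qed
  have "1 \<le> t"
    using canon_touches_below_scale_ge_one[OF super y1 _ _ \<rho>(1) t(1) touch] \<Omega>_sub y1 by auto
  then show False using t by simp
qed

lemma canon_le_outside_ball:
  assumes super: "visc_super f \<Gamma> u \<Omega>" and cont: "continuous_on \<Omega> u" and pos: "\<forall>x\<in>\<Omega>. u x > 0"
    and blowup: "\<forall>M. \<exists>\<delta>>0. \<forall>x\<in>\<Omega>. infdist x (frontier \<Omega>) < \<delta> \<longrightarrow> u x > M"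
    and "open \<Omega>" "bounded \<Omega>"
    and r: "r > 0" and far: "\<forall>z\<in>\<Omega>. r \<le> dist z c" and y: "y \<in> \<Omega>" "r < dist y c"
  shows "canon 1 \<alpha> r c y \<le> u y"
proof -
  define \<Phi> where "\<Phi> \<rho> = \<alpha> * (\<rho> / ((dist y c)^2 - \<rho>^2)) powr \<kappa>" for \<rho>
  have "r^2 < (dist y c)^2" using y(2) r by (simp add: power_strict_mono)
  then have "(\<Phi> \<longlongrightarrow> \<Phi> r) (at_left r)"
    unfolding \<Phi>_def using r by (intro tendsto_intros) auto
  moreover have "eventually (\<lambda>\<rho>. \<Phi> \<rho> \<le> u y) (at_left r)"
    using eventually_at_left_real[OF r]
  proof (rule eventually_mono)
    fix \<rho> assume "\<rho> \<in> {0<..<r}"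
    with canon_le_outside_cball[OF assms(1-6) _ _ far y(1)] show "\<Phi> \<rho> \<le> u y"
      by (simp add: canon_eq \<Phi>_def)
  qed
  ultimately have "\<Phi> r \<le> u y" by (rule tendsto_upperbound) simp
  then show ?thesis by (simp add: canon_eq \<Phi>_def)
qed

end

section \<open>Tangent balls at the boundary of a smooth domain\<close>

lemma pderiv2_bounded_on_cball:
  assumes "Ck_on 2 U \<rho>" "cball p s \<subseteq> U"
  obtains B where "B > 0" "\<And>z i j. z \<in> cball p s \<Longrightarrow> \<bar>pderiv (pderiv \<rho> i) j z\<bar> \<le> B"
proof -
  define F where "F z = (\<Sum>i\<in>UNIV. \<Sum>j\<in>UNIV. \<bar>pderiv (pderiv \<rho> i) j z\<bar>)" for z
  have "continuous_on (cball p s) (pderiv (pderiv \<rho> i) j)" for i j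
    using assms continuous_on_subset by (simp add: numeral_2_eq_2) blast
  then have "continuous_on (cball p s) F"
    unfolding F_def by (intro continuous_intros)
  then have "bounded (F ` cball p s)"
    by (intro compact_imp_bounded compact_continuous_image compact_cball)
  then obtain B where "B > 0" and B: "\<And>z. z \<in> cball p s \<Longrightarrow> \<bar>F z\<bar> \<le> B"
    unfolding bounded_pos by auto
  have "\<bar>pderiv (pderiv \<rho> i) j z\<bar> \<le> F z" for i j z
  proof -
    have "\<bar>pderiv (pderiv \<rho> i) j z\<bar> \<le> (\<Sum>j\<in>UNIV. \<bar>pderiv (pderiv \<rho> i) j z\<bar>)"
      by (rule member_le_sum) auto
    also have "\<dots> \<le> F z" unfolding F_def
      by (rule member_le_sum[where f = "\<lambda>i. \<Sum>j\<in>UNIV. \<bar>pderiv (pderiv \<rho> i) j z\<bar>"])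
        (auto intro: sum_nonneg)
    finally show ?thesis .
  qed
  then have "\<bar>pderiv (pderiv \<rho> i) j z\<bar> \<le> B" if "z \<in> cball p s" for i j z
    using B[OF that] by (meson abs_ge_self order_trans)
  with \<open>B > 0\<close> show ?thesis using that by blast
qed

lemma segment_in_cball:
  fixes p z w :: "real^'n"
  assumes "z \<in> cball p s" "w \<in> cball p s" "0 \<le> t" "t \<le> 1"
  shows "w + t *\<^sub>R (z - w) \<in> cball p s"
proof -
  have "(1 - t) *\<^sub>R w + t *\<^sub>R z \<in> cball p s"
    using assms by (intro convexD[OF convex_cball]) auto
  then show ?thesis by (simp add: algebra_simps)
qed

lemma grad_lipschitz_on_cball:
  assumes C2: "Ck_on 2 U \<rho>" and sub: "cball p s \<subseteq> U"
  obtains L where "L > 0"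
    "\<And>z w. z \<in> cball p s \<Longrightarrow> w \<in> cball p s \<Longrightarrow> norm (grad \<rho> z - grad \<rho> w) \<le> L * norm (z - w)"
proof -
  obtain B where "B > 0" and B: "\<And>z i j. z \<in> cball p s \<Longrightarrow> \<bar>pderiv (pderiv \<rho> i) j z\<bar> \<le> B"
    using pderiv2_bounded_on_cball[OF C2 sub] by blast
  define n where "n = real CARD('a)"
  have partial: "\<bar>pderiv \<rho> i z - pderiv \<rho> i w\<bar> \<le> n * B * norm (z - w)"
    if z: "z \<in> cball p s" and w: "w \<in> cball p s" for z w i
  proof -
    have "pderiv \<rho> i differentiable (at x)" if "x \<in> U" for x
      using C2 that by (simp add: numeral_2_eq_2)
    then obtain t where t: "0 < t" "t < 1"
      and eq: "pderiv \<rho> i z - pderiv \<rho> i w = grad (pderiv \<rho> i) (w + t *\<^sub>R (z - w)) \<bullet> (z - w)"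
      using mean_value_grad[where a = w and b = z and g = "pderiv \<rho> i"] segment_in_cball[OF z w] sub by blast
    define \<xi> where "\<xi> = w + t *\<^sub>R (z - w)"
    have \<xi>: "\<xi> \<in> cball p s" unfolding \<xi>_def using segment_in_cball[OF z w] t by auto
    have "norm (grad (pderiv \<rho> i) \<xi>) \<le> (\<Sum>j\<in>UNIV. \<bar>pderiv (pderiv \<rho> i) j \<xi>\<bar>)"
      using norm_le_l1_cart[of "grad (pderiv \<rho> i) \<xi>"] by (simp add: grad_def)
    also have "\<dots> \<le> n * B" unfolding n_def by (rule sum_bounded_above) (use B[OF \<xi>] in simp)
    finally have "norm (grad (pderiv \<rho> i) \<xi>) * norm (z - w) \<le> n * B * norm (z - w)"
      by (rule mult_right_mono) simp
    then show ?thesis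
      unfolding eq \<xi>_def[symmetric] using Cauchy_Schwarz_ineq2 order_trans by blast
  qed
  have "norm (grad \<rho> z - grad \<rho> w) \<le> (n * n * B + 1) * norm (z - w)"
    if "z \<in> cball p s" "w \<in> cball p s" for z w
  proof -
    have "norm (grad \<rho> z - grad \<rho> w) \<le> (\<Sum>i\<in>UNIV. \<bar>(grad \<rho> z - grad \<rho> w) $ i\<bar>)"
      by (rule norm_le_l1_cart)
    also have "\<dots> \<le> n * (n * B * norm (z - w))"
      unfolding n_def by (rule sum_bounded_above) (use partial[OF that] in \<open>simp add: grad_def n_def\<close>)
    also have "\<dots> \<le> (n * n * B + 1) * norm (z - w)"
      by (simp add: algebra_simps)
    finally show ?thesis .
  qed
  moreover have "n * n * B + 1 > 0"
    using \<open>B > 0\<close> by (simp add: n_def add_pos_nonneg)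
  ultimately show ?thesis using that by blast
qed


lemma first_order_remainder_le:
  fixes \<rho> :: "real^'n \<Rightarrow> real"
  assumes diff: "\<And>x. x \<in> cball p s \<Longrightarrow> \<rho> differentiable (at x)"
    and lip: "\<And>z w. z \<in> cball p s \<Longrightarrow> w \<in> cball p s \<Longrightarrow>
                norm (grad \<rho> z - grad \<rho> w) \<le> L * norm (z - w)"
    and L: "L \<ge> 0" and y: "y \<in> cball p s" and q: "q \<in> cball p s"
  shows "\<bar>\<rho> y - \<rho> q - grad \<rho> q \<bullet> (y - q)\<bar> \<le> L * (norm (y - q))^2"
proof -
  obtain t where t: "0 < t" "t < 1"
    and eq: "\<rho> y - \<rho> q = grad \<rho> (q + t *\<^sub>R (y - q)) \<bullet> (y - q)"
    using mean_value_grad[where a = q and b = y and g = \<rho>] diff segment_in_cball[OF y q] by blast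
  define \<xi> where "\<xi> = q + t *\<^sub>R (y - q)"
  have \<xi>: "\<xi> \<in> cball p s" unfolding \<xi>_def using segment_in_cball[OF y q] t by auto
  have "norm (\<xi> - q) \<le> norm (y - q)" using t by (simp add: \<xi>_def mult_left_le_one_le)
  then have "norm (grad \<rho> \<xi> - grad \<rho> q) \<le> L * norm (y - q)"
    using lip[OF \<xi> q] L by (meson mult_left_mono order_trans)
  then have "norm (grad \<rho> \<xi> - grad \<rho> q) * norm (y - q) \<le> L * norm (y - q) * norm (y - q)"
    by (rule mult_right_mono) simp
  then have "norm (grad \<rho> \<xi> - grad \<rho> q) * norm (y - q) \<le> L * (norm (y - q))^2"
    by (simp add: power2_eq_square mult.assoc)
  moreover have "\<rho> y - \<rho> q - grad \<rho> q \<bullet> (y - q) = (grad \<rho> \<xi> - grad \<rho> q) \<bullet> (y - q)"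
    unfolding eq \<xi>_def by (simp add: inner_diff_left)
  ultimately show ?thesis using Cauchy_Schwarz_ineq2 order_trans by metis
qed

lemma norm_grad_bounded_below_on_cball:
  assumes C2: "Ck_on 2 U \<rho>" and sub: "cball p s \<subseteq> U" and nz: "\<And>x. x \<in> U \<Longrightarrow> grad \<rho> x \<noteq> 0"
  obtains m where "m > 0" "\<And>z. z \<in> cball p s \<Longrightarrow> m \<le> norm (grad \<rho> z)"
proof (cases "cball p s = {}")
  case False
  have "continuous_on (cball p s) (\<lambda>z. norm (grad \<rho> z))"
    using C2 unfolding grad_def numeral_2_eq_2
    by (intro continuous_on_norm continuous_on_vec_lambda) (auto intro: continuous_on_subset[OF _ sub])
  then obtain z0 where "z0 \<in> cball p s" "\<And>z. z \<in> cball p s \<Longrightarrow> norm (grad \<rho> z0) \<le> norm (grad \<rho> z)"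
    using continuous_attains_inf[OF compact_cball False] by blast
  moreover have "norm (grad \<rho> z0) > 0" using nz sub \<open>z0 \<in> cball p s\<close> by auto
  ultimately show ?thesis using that by blast
qed (use that[of 1] in auto)

text \<open>A function lying below its tangent plane up to a quadratic error is negative in a
  ball of radius \<open>r\<close> touching the level set at \<open>q\<close> from the side opposite to \<open>G\<close>, as long
  as the curvature bound \<open>2 r L \<le> |G|\<close> holds.\<close>
lemma neg_in_ball_below_tangent:
  fixes q G :: "'a::real_inner"
  assumes r: "r > 0" and G: "G \<noteq> 0" and curv: "2 * r * L \<le> norm G"
    and bound: "\<And>y. norm (y - q) < 2 * r \<Longrightarrow> g y \<le> G \<bullet> (y - q) + L * (norm (y - q))^2"
    and y: "y \<in> ball (q - (r / norm G) *\<^sub>R G) r"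
  shows "g y < 0"
proof -
  define N where "N = (1 / norm G) *\<^sub>R G"
  define w where "w = y - q"
  have N: "norm N = 1" "G = norm G *\<^sub>R N" using G by (simp_all add: N_def)
  have d: "norm (w + r *\<^sub>R N) < r"
    using y by (simp add: dist_norm w_def N_def algebra_simps norm_minus_commute)
  have w: "norm w < 2 * r"
    using norm_triangle_sub[of w "w + r *\<^sub>R N"] d N(1) r by simp
  define a where "a = w \<bullet> w"
  have "N \<bullet> N = 1" using N(1) by (simp add: norm_eq_1)
  then have "(norm (w + r *\<^sub>R N))^2 = a + 2 * r * (N \<bullet> w) + r^2"
    unfolding power2_norm_eq_inner
    by (simp add: a_def inner_add_left inner_add_right inner_commute algebra_simps power2_eq_square)
  moreover have "(norm (w + r *\<^sub>R N))^2 < r^2" using d by (simp add: power_strict_mono)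
  ultimately have Nw: "N \<bullet> w < - a / (2 * r)" using r by (simp add: field_simps)
  have "G \<bullet> w = norm G * (N \<bullet> w)" by (subst N(2)) simp
  also have "\<dots> < norm G * (- a / (2 * r))"
    using Nw G by (intro mult_strict_left_mono) auto
  also have "\<dots> \<le> - L * a"
  proof -
    have "2 * r * L * a \<le> norm G * a" using curv by (intro mult_right_mono) (auto simp: a_def)
    then show ?thesis using r by (simp add: field_simps)
  qed
  finally show ?thesis using bound[OF w[unfolded w_def]] by (simp add: w_def a_def power2_norm_eq_inner)
qed

text \<open>\<open>e\<close> is the inner unit normal at \<open>q\<close>, and the balls of radius \<open>r\<close> centred at \<open>q \<plusminus> r e\<close>
  lie inside, respectively outside, \<open>\<Omega>\<close>.\<close>
definition tangent_balls :: "'a::real_normed_vector set \<Rightarrow> 'a \<Rightarrow> real \<Rightarrow> 'a \<Rightarrow> bool" where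
  "tangent_balls \<Omega> q r e \<longleftrightarrow>
     norm e = 1 \<and> ball (q + r *\<^sub>R e) r \<subseteq> \<Omega> \<and> (\<forall>z\<in>\<Omega>. r \<le> dist z (q - r *\<^sub>R e))"

lemma tangent_balls_mono:
  assumes "tangent_balls \<Omega> q r e" "r' \<le> r"
  shows "tangent_balls \<Omega> q r' e"
proof -
  have e: "norm e = 1" "ball (q + r *\<^sub>R e) r \<subseteq> \<Omega>" "\<forall>z\<in>\<Omega>. r \<le> dist z (q - r *\<^sub>R e)"
    using assms(1) by (auto simp: tangent_balls_def)
  have dd: "dist (q + r' *\<^sub>R e) (q + r *\<^sub>R e) = r - r'" "dist (q - r *\<^sub>R e) (q - r' *\<^sub>R e) = r - r'"
    using e(1) assms(2) by (simp_all add: dist_norm algebra_simps flip: scaleR_diff_left)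
  have "ball (q + r' *\<^sub>R e) r' \<subseteq> ball (q + r *\<^sub>R e) r"
  proof
    fix y assume "y \<in> ball (q + r' *\<^sub>R e) r'"
    then show "y \<in> ball (q + r *\<^sub>R e) r"
      using dd(1) dist_triangle3[of "q + r *\<^sub>R e" y "q + r' *\<^sub>R e"] by simp
  qed
  moreover have "r' \<le> dist z (q - r' *\<^sub>R e)" if "z \<in> \<Omega>" for z
    using e(3) that dd(2) dist_triangle2[of z "q - r *\<^sub>R e" "q - r' *\<^sub>R e"] by force
  ultimately show ?thesis using e by (auto simp: tangent_balls_def)
qed

lemma tangent_balls_at_zero_of_defining_function:
  fixes q G :: "'a::real_inner"
  assumes r: "r > 0" and G: "G \<noteq> 0" "2 * r * L \<le> norm G"
    and taylor: "\<And>y. norm (y - q) < 2 * r \<Longrightarrow> \<bar>\<rho> y - G \<bullet> (y - q)\<bar> \<le> L * (norm (y - q))^2"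
    and U: "ball q (2 * r) \<subseteq> U" and \<Omega>: "\<Omega> \<inter> U = {x\<in>U. \<rho> x < 0}"
  shows "tangent_balls \<Omega> q r (- (1 / norm G) *\<^sub>R G)"
proof -
  define e where "e = - (1 / norm G) *\<^sub>R G"
  have e: "norm e = 1" "(r / norm G) *\<^sub>R G = - r *\<^sub>R e" "(r / norm (- G)) *\<^sub>R - G = r *\<^sub>R e"
    using G(1) by (simp_all add: e_def)
  have close: "norm (y - q) < 2 * r" "y \<in> U" if "y \<in> ball (q + t *\<^sub>R e) r" "\<bar>t\<bar> = r" for y t
  proof -
    have "norm (y - q) \<le> dist (q + t *\<^sub>R e) y + norm (t *\<^sub>R e)"
      using norm_triangle_ineq[of "y - (q + t *\<^sub>R e)" "t *\<^sub>R e"]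
      by (simp add: dist_norm norm_minus_commute algebra_simps)
    then show "norm (y - q) < 2 * r" using that e(1) by simp
    then show "y \<in> U" using U by (auto simp: dist_norm norm_minus_commute)
  qed
  have "\<rho> y < 0" if "y \<in> ball (q + r *\<^sub>R e) r" for y
    by (rule neg_in_ball_below_tangent[OF r G]) (use taylor that e(2) in force)+
  then have "ball (q + r *\<^sub>R e) r \<subseteq> \<Omega>"
    using close[of _ r] r \<Omega> by auto
  moreover have "r \<le> dist z (q - r *\<^sub>R e)" if "z \<in> \<Omega>" for z
  proof (rule ccontr)
    assume "\<not> r \<le> dist z (q - r *\<^sub>R e)"
    then have z: "z \<in> ball (q + (- r) *\<^sub>R e) r" by (simp add: dist_commute)
    have "- \<rho> z < 0"
      by (rule neg_in_ball_below_tangent[of r "- G" L _ "\<lambda>y. - \<rho> y", OF r])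
        (use G taylor z e(3) in force)+
    moreover have "z \<in> \<Omega> \<inter> U" using close(2)[OF z] r that by simp
    then have "\<rho> z < 0" using \<Omega> by blast
    ultimately show False by simp
  qed
  ultimately show ?thesis using e(1) unfolding tangent_balls_def e_def by blast
qed

lemma tangent_balls_near_boundary_point:
  fixes \<Omega> :: "(real^'n) set"
  assumes dom: "smooth_bounded_domain \<Omega>" and p: "p \<in> frontier \<Omega>"
  obtains \<eta> r where "\<eta> > 0" "r > 0" "\<And>q. q \<in> frontier \<Omega> \<inter> ball p \<eta> \<Longrightarrow> \<exists>e. tangent_balls \<Omega> q r e"
proof -
  obtain U \<rho> where U: "p \<in> U" "smooth_on U \<rho>" "\<forall>x\<in>U. grad \<rho> x \<noteq> 0"
    "\<Omega> \<inter> U = {x\<in>U. \<rho> x < 0}" "frontier \<Omega> \<inter> U = {x\<in>U. \<rho> x = 0}"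
    using dom p unfolding smooth_bounded_domain_def by blast
  have "open U" and C2: "Ck_on 2 U \<rho>" using U(2) by (auto simp: smooth_on_def)
  obtain s where s: "s > 0" "cball p s \<subseteq> U" using \<open>open U\<close> U(1) open_contains_cball by blast
  obtain L where L: "L > 0"
    "\<And>z w. z \<in> cball p s \<Longrightarrow> w \<in> cball p s \<Longrightarrow> norm (grad \<rho> z - grad \<rho> w) \<le> L * norm (z - w)"
    using grad_lipschitz_on_cball[OF C2 s(2)] by blast
  obtain m where m: "m > 0" "\<And>z. z \<in> cball p s \<Longrightarrow> m \<le> norm (grad \<rho> z)"
    using norm_grad_bounded_below_on_cball[OF C2 s(2)] U(3) by blast
  define r where "r = min (s / 4) (m / (2 * L))"
  have r: "r > 0" "4 * r \<le> s" "2 * r * L \<le> m"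
    using m(1) s(1) L(1) by (auto simp: r_def min_def field_simps)
  have "tangent_balls \<Omega> q r (- (1 / norm (grad \<rho> q)) *\<^sub>R grad \<rho> q)"
    if q: "q \<in> frontier \<Omega>" "q \<in> ball p (s / 2)" for q
  proof (rule tangent_balls_at_zero_of_defining_function[OF r(1) _ _ _ _ U(4)])
    have near: "ball q (2 * r) \<subseteq> cball p s"
    proof
      fix y assume "y \<in> ball q (2 * r)"
      then show "y \<in> cball p s" using q(2) r(2) dist_triangle[of p y q] by simp
    qed
    then show "ball q (2 * r) \<subseteq> U" using s(2) by blast
    have "q \<in> ball q (2 * r)" using r(1) by simp
    then have qs: "q \<in> cball p s" using near by blast
    show "grad \<rho> q \<noteq> 0" "2 * r * L \<le> norm (grad \<rho> q)"
      using U(3) qs s(2) r(3) m(2)[OF qs] by auto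
    have "\<rho> q = 0" using q(1) qs s(2) U(5) by auto
    moreover have "\<rho> differentiable (at x)" if "x \<in> cball p s" for x
      using C2 that s(2) by (auto simp: numeral_2_eq_2)
    ultimately show "\<bar>\<rho> y - grad \<rho> q \<bullet> (y - q)\<bar> \<le> L * (norm (y - q))^2" if "norm (y - q) < 2 * r" for y
      using first_order_remainder_le[of p s \<rho> L y q] L near qs that
      by (auto simp: dist_norm norm_minus_commute)
  qed
  then show ?thesis using that[of "s / 2" r] s(1) r(1) by auto
qed

lemma tangent_balls_uniform:
  fixes \<Omega> :: "(real^'n) set"
  assumes dom: "smooth_bounded_domain \<Omega>"
  obtains r where "r > 0" "\<And>q. q \<in> frontier \<Omega> \<Longrightarrow> \<exists>e. tangent_balls \<Omega> q r e"
proof -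
  have "\<forall>p\<in>frontier \<Omega>. \<exists>\<eta> r. \<eta> > 0 \<and> r > 0 \<and>
          (\<forall>q\<in>frontier \<Omega> \<inter> ball p \<eta>. \<exists>e. tangent_balls \<Omega> q r e)"
    by (metis tangent_balls_near_boundary_point[OF dom])
  then obtain \<eta> R where \<eta>R: "\<And>p. p \<in> frontier \<Omega> \<Longrightarrow> \<eta> p > 0 \<and> R p > 0 \<and>
          (\<forall>q\<in>frontier \<Omega> \<inter> ball p (\<eta> p). \<exists>e. tangent_balls \<Omega> q (R p) e)"
    by metis
  have "compact (frontier \<Omega>)"
    using dom by (intro compact_frontier_bounded) (simp add: smooth_bounded_domain_def)
  moreover have "frontier \<Omega> \<subseteq> (\<Union>p\<in>frontier \<Omega>. ball p (\<eta> p))"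
    using \<eta>R by force
  ultimately obtain D where D: "D \<subseteq> frontier \<Omega>" "finite D" "frontier \<Omega> \<subseteq> (\<Union>p\<in>D. ball p (\<eta> p))"
    by (elim compactE_image) auto
  define r where "r = Min (insert 1 (R ` D))"
  have "r > 0" using D \<eta>R by (auto simp: r_def)
  moreover have "\<exists>e. tangent_balls \<Omega> q r e" if q: "q \<in> frontier \<Omega>" for q
  proof -
    obtain p where p: "p \<in> D" "q \<in> ball p (\<eta> p)" using D(3) q by blast
    then obtain e where "tangent_balls \<Omega> q (R p) e" using \<eta>R D(1) q by blast
    moreover have "r \<le> R p" using D(2) p(1) by (simp add: r_def)
    ultimately show ?thesis using tangent_balls_mono by blast
  qed
  ultimately show ?thesis using that by blast
qed

lemma add_le_dist_if_cball_avoids: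
  fixes x c :: "'a::real_normed_vector"
  assumes avoid: "\<And>z. z \<in> cball x d \<Longrightarrow> r \<le> dist z c" and r: "r > 0" and d: "d \<ge> 0"
  shows "r + d \<le> dist x c"
proof (cases "dist x c \<le> d")
  case True
  then show ?thesis using avoid[of c] r by (simp add: dist_commute)
next
  case False
  define u where "u = (1 / dist x c) *\<^sub>R (c - x)"
  have D: "dist x c > 0" using False d by linarith
  then have u: "norm u = 1" "c - x = dist x c *\<^sub>R u"
    by (auto simp: u_def dist_norm norm_minus_commute)
  have "(x + d *\<^sub>R u) - c = (d - dist x c) *\<^sub>R u" using u(2) by (simp add: algebra_simps)
  then have "dist x (x + d *\<^sub>R u) = d" "dist (x + d *\<^sub>R u) c = dist x c - d"
    using False d u(1) by (auto simp: dist_norm)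
  then show ?thesis using avoid[of "x + d *\<^sub>R u"] by (simp add: dist_commute)
qed

text \<open>The ball about \<open>x\<close> of radius \<open>dist x q\<close> lies in \<open>\<Omega>\<close> and the exterior tangent ball at \<open>q\<close>
  does not meet \<open>\<Omega>\<close>; two such balls touching at \<open>q\<close> must have collinear centres.\<close>
lemma nearest_boundary_point_on_normal:
  fixes \<Omega> :: "'a::euclidean_space set"
  assumes "open \<Omega>" "x \<in> \<Omega>" "dist x q = infdist x (frontier \<Omega>)" and tb: "tangent_balls \<Omega> q r e"
    and r: "r > 0"
  shows "x = q + dist x q *\<^sub>R e"
proof -
  define d where "d = dist x q"
  define c where "c = q - r *\<^sub>R e"
  have e: "norm e = 1" "\<forall>z\<in>\<Omega>. r \<le> dist z c"
    using tb by (auto simp: tangent_balls_def c_def)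
  have "closed {z. r \<le> dist z c}"
    by (rule closed_Collect_le) (auto intro!: continuous_intros)
  then have far: "r \<le> dist z c" if "z \<in> closure \<Omega>" for z
    using closure_minimal[of \<Omega> "{z. r \<le> dist z c}"] e(2) that by auto
  have ball: "cball x d \<subseteq> closure \<Omega>"
  proof (cases "d = 0")
    case True
    then show ?thesis using assms(2) closure_subset by auto
  next
    case False
    then have "cball x d = closure (ball x d)" by (simp add: d_def)
    also have "\<dots> \<subseteq> closure \<Omega>"
      using ball_infdist_frontier_subset[OF assms(1,2)] assms(3) by (intro closure_mono) (simp add: d_def)
    finally show ?thesis .
  qed
  have qc: "dist q c = r" using e(1) r by (simp add: c_def dist_norm)
  have "r + d \<le> dist x c"
    by (rule add_le_dist_if_cball_avoids[OF far[OF subsetD[OF ball]] r]) (simp_all add: d_def)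
  moreover have "dist x c \<le> d + r"
    using dist_triangle[of x c q] qc by (simp add: d_def)
  ultimately have "norm ((x - q) + (q - c)) = norm (x - q) + norm (q - c)"
    using qc by (simp add: d_def dist_norm)
  then have "d *\<^sub>R (r *\<^sub>R e) = r *\<^sub>R (x - q)"
    unfolding norm_triangle_eq using qc by (simp add: c_def d_def dist_norm)
  then have "r *\<^sub>R (x - q) = r *\<^sub>R (d *\<^sub>R e)" by (simp add: mult.commute)
  then have "x - q = d *\<^sub>R e" using r by (simp only: scaleR_cancel_left) simp
  then show ?thesis by (simp add: d_def algebra_simps)
qed

section \<open>Boundary asymptotics\<close>

lemma eps_delta_squeeze:
  fixes lo hi :: "real \<Rightarrow> real"
  assumes "isCont lo 0" "isCont hi 0" "lo 0 = T" "hi 0 = T" "r > 0"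
    and bounds: "\<And>x. x \<in> S \<Longrightarrow> d x < r \<Longrightarrow> lo (d x) \<le> g x \<and> g x \<le> hi (d x)"
    and d_nonneg: "\<And>x. x \<in> S \<Longrightarrow> d x \<ge> 0"
  shows "\<forall>\<epsilon>>0. \<exists>\<delta>>0. \<forall>x\<in>S. d x < \<delta> \<longrightarrow> \<bar>g x - T\<bar> < \<epsilon>"
proof (intro allI impI)
  fix \<epsilon> :: real assume "\<epsilon> > 0"
  then obtain \<delta>1 \<delta>2 where \<delta>: "\<delta>1 > 0" "\<And>t. \<bar>t\<bar> < \<delta>1 \<Longrightarrow> \<bar>lo t - T\<bar> < \<epsilon>"
    "\<delta>2 > 0" "\<And>t. \<bar>t\<bar> < \<delta>2 \<Longrightarrow> \<bar>hi t - T\<bar> < \<epsilon>"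
    using assms(1-4) unfolding continuous_at_eps_delta dist_real_def by (metis diff_zero)
  show "\<exists>\<delta>>0. \<forall>x\<in>S. d x < \<delta> \<longrightarrow> \<bar>g x - T\<bar> < \<epsilon>"
  proof (intro exI[of _ "min r (min \<delta>1 \<delta>2)"] conjI ballI impI)
    fix x assume "x \<in> S" "d x < min r (min \<delta>1 \<delta>2)"
    then have "\<bar>lo (d x) - T\<bar> < \<epsilon>" "\<bar>hi (d x) - T\<bar> < \<epsilon>" "lo (d x) \<le> g x \<and> g x \<le> hi (d x)"
      using \<delta>(2,4) bounds d_nonneg by auto
    then show "\<bar>g x - T\<bar> < \<epsilon>" by linarith
  qed (use assms(5) \<delta> in auto)
qed

context canonical_equation
begin

lemma powr_cancel_distance:
  assumes "d > 0" "b > 0" "r > 0"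
  shows "d powr \<kappa> * (\<alpha> * (r / (d * b)) powr \<kappa>) = \<alpha> * (r / b) powr \<kappa>"
proof -
  have "(r / (d * b)) powr \<kappa> = (r / b) powr \<kappa> / d powr \<kappa>"
    using assms by (simp add: powr_divide[symmetric] field_simps)
  then show ?thesis using assms by simp
qed

lemma two_sided_bound_at_nearest_point:
  assumes sol: "visc_solution f \<Gamma> u \<Omega>" and pos: "\<forall>x\<in>\<Omega>. u x > 0"
    and blowup: "\<forall>M. \<exists>\<delta>>0. \<forall>x\<in>\<Omega>. infdist x (frontier \<Omega>) < \<delta> \<longrightarrow> u x > M"
    and \<Omega>: "open \<Omega>" "bounded \<Omega>" and x: "x \<in> \<Omega>"
    and q: "q \<in> frontier \<Omega>" "d = dist x q" "d = infdist x (frontier \<Omega>)"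
    and tb: "tangent_balls \<Omega> q r e" and r: "r > 0" "d < r"
  shows "\<alpha> * (r / (2 * r + d)) powr \<kappa> \<le> d powr \<kappa> * u x"
    and "d powr \<kappa> * u x \<le> \<alpha> * (r / (2 * r - d)) powr \<kappa>"
proof -
  have sol: "visc_sub f \<Gamma> u \<Omega>" "visc_super f \<Gamma> u \<Omega>" "continuous_on \<Omega> u"
    using sol by (auto simp: visc_solution_def)
  have e: "norm e = 1" "ball (q + r *\<^sub>R e) r \<subseteq> \<Omega>" "\<forall>z\<in>\<Omega>. r \<le> dist z (q - r *\<^sub>R e)"
    using tb by (auto simp: tangent_balls_def)
  have "d > 0"
    using q x \<Omega>(1) frontier_disjoint_eq zero_less_dist_iff by (metis disjoint_iff dist_self)
  have "x = q + d *\<^sub>R e"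
    using nearest_boundary_point_on_normal[OF \<Omega>(1) x _ tb r(1)] q by simp
  then have dist_centres: "dist x (q + r *\<^sub>R e) = r - d" "dist x (q - r *\<^sub>R e) = r + d"
    using e(1) r(2) \<open>d > 0\<close> by (simp_all add: dist_norm algebra_simps flip: scaleR_diff_left scaleR_add_left)
  have "u x \<le> canon (-1) \<alpha> r (q + r *\<^sub>R e) x"
    using le_canon_in_ball[OF sol(1,3) r(1) e(2)] dist_centres \<open>d > 0\<close> by (simp add: dist_commute)
  also have "\<dots> = \<alpha> * (r / (d * (2 * r - d))) powr \<kappa>"
    by (simp add: canon_eq dist_centres power2_eq_square algebra_simps)
  finally have "d powr \<kappa> * u x \<le> d powr \<kappa> * (\<alpha> * (r / (d * (2 * r - d))) powr \<kappa>)"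
    by (rule mult_left_mono) simp
  also have "\<dots> = \<alpha> * (r / (2 * r - d)) powr \<kappa>"
    by (rule powr_cancel_distance) (use \<open>d > 0\<close> r in auto)
  finally show "d powr \<kappa> * u x \<le> \<alpha> * (r / (2 * r - d)) powr \<kappa>" .
  have "\<alpha> * (r / (d * (2 * r + d))) powr \<kappa> = canon 1 \<alpha> r (q - r *\<^sub>R e) x"
    by (simp add: canon_eq dist_centres power2_eq_square algebra_simps)
  also have "\<dots> \<le> u x"
    using canon_le_outside_ball[OF sol(2,3) pos blowup \<Omega> r(1) e(3) x] dist_centres \<open>d > 0\<close>
    by simp
  finally have "d powr \<kappa> * (\<alpha> * (r / (d * (2 * r + d))) powr \<kappa>) \<le> d powr \<kappa> * u x"
    by (rule mult_left_mono) simp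
  moreover have "d powr \<kappa> * (\<alpha> * (r / (d * (2 * r + d))) powr \<kappa>) = \<alpha> * (r / (2 * r + d)) powr \<kappa>"
    by (rule powr_cancel_distance) (use \<open>d > 0\<close> r(1) in auto)
  ultimately show "\<alpha> * (r / (2 * r + d)) powr \<kappa> \<le> d powr \<kappa> * u x" by simp
qed

lemma boundary_two_sided_bound:
  assumes dom: "smooth_bounded_domain \<Omega>" and sol: "visc_solution f \<Gamma> u \<Omega>"
    and pos: "\<forall>x\<in>\<Omega>. u x > 0"
    and blowup: "\<forall>M. \<exists>\<delta>>0. \<forall>x\<in>\<Omega>. infdist x (frontier \<Omega>) < \<delta> \<longrightarrow> u x > M"
  obtains r where "r > 0" "\<And>x d. x \<in> \<Omega> \<Longrightarrow> d = infdist x (frontier \<Omega>) \<Longrightarrow> d < r \<Longrightarrow>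
      \<alpha> * (r / (2 * r + d)) powr \<kappa> \<le> d powr \<kappa> * u x \<and> d powr \<kappa> * u x \<le> \<alpha> * (r / (2 * r - d)) powr \<kappa>"
proof -
  have \<Omega>: "open \<Omega>" "bounded \<Omega>" "\<Omega> \<noteq> {}" using dom by (auto simp: smooth_bounded_domain_def)
  have "frontier \<Omega> \<noteq> {}"
    using \<Omega>(2) not_bounded_UNIV by (intro frontier_not_empty[OF \<Omega>(3)]) blast
  then have frontier: "closed (frontier \<Omega>)" "frontier \<Omega> \<noteq> {}" by simp_all
  obtain r where r: "r > 0" "\<And>q. q \<in> frontier \<Omega> \<Longrightarrow> \<exists>e. tangent_balls \<Omega> q r e"
    using tangent_balls_uniform[OF dom] by blast
  have "\<alpha> * (r / (2 * r + d)) powr \<kappa> \<le> d powr \<kappa> * u x \<and> d powr \<kappa> * u x \<le> \<alpha> * (r / (2 * r - d)) powr \<kappa>"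
    if x: "x \<in> \<Omega>" and d: "d = infdist x (frontier \<Omega>)" "d < r" for x d
  proof -
    obtain q where q: "q \<in> frontier \<Omega>" "d = dist x q"
      using infdist_attains_inf[OF frontier] d(1) by auto
    then obtain e where "tangent_balls \<Omega> q r e" using r(2) by blast
    from two_sided_bound_at_nearest_point[OF sol pos blowup \<Omega>(1,2) x q d(1) this r(1) d(2)]
    show ?thesis by blast
  qed
  then show ?thesis using that r(1) by blast
qed

end

theorem lemma3p4:
  fixes f :: "real^'n::finite \<Rightarrow> real" and \<Gamma> :: "(real^'n) set"
    and \<Omega> :: "(real^'n) set" and u :: "real^'n \<Rightarrow> real" and \<alpha> :: real
  assumes "CARD('n) \<ge> 3"
    and "smooth_bounded_domain \<Omega>"
    and "structural f \<Gamma>"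
    and "canonical_const f \<Gamma> \<alpha>"
    and "visc_solution f \<Gamma> u \<Omega>"
    and "\<forall>x\<in>\<Omega>. u x > 0"
    and "\<forall>M. \<exists>\<delta>>0. \<forall>x\<in>\<Omega>. infdist x (frontier \<Omega>) < \<delta> \<longrightarrow> u x > M"
  shows "\<forall>\<epsilon>>0. \<exists>\<delta>>0. \<forall>x\<in>\<Omega>. infdist x (frontier \<Omega>) < \<delta> \<longrightarrow>
           \<bar>infdist x (frontier \<Omega>) powr ((real CARD('n) - 2) / 2) * u x
             - \<alpha> * 2 powr (- (real CARD('n) - 2) / 2)\<bar> < \<epsilon>"
proof -
  interpret canonical_equation f \<Gamma> \<alpha>
    using assms(1,3,4) by unfold_locales
  obtain r where r: "r > 0" "\<And>x d. x \<in> \<Omega> \<Longrightarrow> d = infdist x (frontier \<Omega>) \<Longrightarrow> d < r \<Longrightarrow>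
      \<alpha> * (r / (2 * r + d)) powr \<kappa> \<le> d powr \<kappa> * u x \<and> d powr \<kappa> * u x \<le> \<alpha> * (r / (2 * r - d)) powr \<kappa>"
    using boundary_two_sided_bound[OF assms(2,5-7)] by blast
  have limit: "\<alpha> * (r / (2 * r)) powr \<kappa> = \<alpha> * 2 powr (- (real CARD('n) - 2) / 2)"
  proof -
    have "(r / (2 * r)) powr \<kappa> = 2 powr (- \<kappa>)"
      using r(1) by (simp add: powr_minus powr_divide inverse_eq_divide)
    then show ?thesis by (simp add: \<kappa>_def minus_divide_left)
  qed
  have "\<forall>\<epsilon>>0. \<exists>\<delta>>0. \<forall>x\<in>\<Omega>. infdist x (frontier \<Omega>) < \<delta> \<longrightarrow>
          \<bar>infdist x (frontier \<Omega>) powr \<kappa> * u x - \<alpha> * (r / (2 * r)) powr \<kappa>\<bar> < \<epsilon>"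
    by (rule eps_delta_squeeze[where lo = "\<lambda>d. \<alpha> * (r / (2 * r + d)) powr \<kappa>"
          and hi = "\<lambda>d. \<alpha> * (r / (2 * r - d)) powr \<kappa>", OF _ _ _ _ r(1)])
      (use r in \<open>auto intro!: continuous_intros infdist_nonneg\<close>)
  then show ?thesis unfolding limit by (simp add: \<kappa>_def)
qed

end
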